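(* Let $X,Y$ be $\mathfrak{Q}$-preordered $\mathfrak{Q}$-subsets. (1) Every $\mathfrak{Q}$-polarity from $X$ to $Y$ (i.e. $\mathfrak{Q}$-Galois connection $f\dashv g$ with $f\colon\mathsf{P}X\to\mathsf{P}^{\dagger}Y$, $g\colon\mathsf{P}^{\dagger}Y\to\mathsf{P}X$) is of the form $\phi_{\uparrow}\dashv\phi^{\downarrow}$ for some $\mathfrak{Q}$-distributor $\phi$ from $X$ to $Y$. (2) Every $\mathfrak{Q}$-axiality from $X$ to $Y$ (i.e. $\mathfrak{Q}$-Galois connection $f\dashv g$ with $f\colon\mathsf{P}X\to\mathsf{P}Y$, $g\colon\mathsf{P}Y\to\mathsf{P}X$) is of the form $\phi^{*}\dashv\phi_{*}$ for some $\mathfrak{Q}$-distributor $\phi$ from $Y$ to $X$. (3) Every dual $\mathfrak{Q}$-axiality from $X$ to $Y$ (i.e. $\mathfrak{Q}$-Galois connection $f\dashv g$ with $f\colon\mathsf{P}^{\dagger}X\to\mathsf{P}^{\dagger}Y$, $g\colon\mathsf{P}^{\dagger}Y\to\mathsf{P}^{\dagger}X$) is of the form $\phi_{\dagger}\dashv\phi^{\dagger}$ for some $\mathfrak{Q}$-distributor $\phi$ from $Y$ to $X$.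
   Context: $(\mathfrak{Q},\&,e)$ is a non-trivial unital quantale (complete lattice with associative multiplication with unit $e$ preserving joins in each variable, $\bot<e$), implications $p\& q\le r\iff p\le r/ q\iff q\le p\backslash r$, $\mathcal{D}\mathfrak{Q}(p,q)=\{u\mid (u/ p)\& p=u=q\&(q\backslash u)\}$. A $\mathfrak{Q}$-subset is a set $X$ with $|\cdot|\colon X\to\mathfrak{Q}$; $\mathbf{1}_q$ is $\{*\}$ with $|*|=q$. A $\mathfrak{Q}$-relation from $X$ to $Y$ is a map $\phi\colon X\times Y\to\mathfrak{Q}$ with $\phi(x,y)\in\mathcal{D}\mathfrak{Q}(|x|,|y|)$, ordered pointwise; composition $(\psi\circ\phi)(x,z)=\bigvee_y(\psi(y,z)/|y|)\&\phi(x,y)$; $\xi\swarrow\phi$ is the largest $\psi'$ with $\psi'\circ\phi\le\xi$ and $\psi\searrow\xi$ the largest $\phi'$ with $\psi\circ\phi'\le\xi$. A $\mathfrak{Q}$-preordered $\mathfrak{Q}$-subset is a $\mathfrak{Q}$-subset $X$ with a $\mathfrak{Q}$-relation $1_X^{\natural}$ on $X$ with $\mathrm{id}_X\le 1_X^{\natural}$ ($\mathrm{id}_X(x,x)=|x|$, else $\bot$) and $1_X^{\natural}\circ 1_X^{\natural}\le 1_X^{\natural}$. A $\mathfrak{Q}$-order-preserving map $h\colon A\to B$ satisfies $|ha|=|a|$ and $1_A^{\natural}(a,a')\le 1_B^{\natural}(ha,ha')$; $h\le k$ means $|a|\le 1_B^{\natural}(ha,ka)$ for all $a$; a $\mathfrak{Q}$-Galois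 connection $h\dashv k$ ($h\colon A\to B$, $k\colon B\to A$ $\mathfrak{Q}$-order-preserving) means $1_A\le kh$ and $hk\le 1_B$. A $\mathfrak{Q}$-distributor from $X$ to $Y$ is a $\mathfrak{Q}$-relation $\phi$ with $1_Y^{\natural}\circ\phi\circ 1_X^{\natural}\le\phi$. $\mathsf{P}X$ consists of $\mathfrak{Q}$-relations $\mu$ from $X$ to some $\mathbf{1}_q$ with $\mu\circ 1_X^{\natural}\le\mu$, $|\mu|=q$, $\mathfrak{Q}$-preorder $1_{\mathsf{P}X}^{\natural}(\mu,\mu')=\mu'\swarrow\mu$; $\mathsf{P}^{\dagger}X$ consists of $\mathfrak{Q}$-relations $\lambda$ from some $\mathbf{1}_q$ to $X$ with $1_X^{\natural}\circ\lambda\le\lambda$, $|\lambda|=q$, $1_{\mathsf{P}^{\dagger}X}^{\natural}(\lambda,\lambda')=\lambda'\searrow\lambda$. For a $\mathfrak{Q}$-distributor $\phi$ from $A$ to $B$: $\phi_{\uparrow}\mu=\phi\swarrow\mu$ ($\mathsf{P}A\to\mathsf{P}^{\dagger}B$), $\phi^{\downarrow}\lambda'=\lambda'\searrow\phi$ ($\mathsf{P}^{\dagger}B\to\mathsf{P}A$), $\phi^{*}\mu'=\mu'\circ\phi$ ($\mathsf{P}B\to\mathsf{P}A$), $\phi_{*}\mu=\mu\swarrow\phi$ ($\mathsf{P}A\to\mathsf{P}B$), $\phi_{\dagger}\lambda'=\phi\searrow\lambda'$ ($\mathsf{P}^{\dagger}B\to\mathsf{P}^{\dagger}A$), $\phi^{\dagger}\lambda=\phi\circ\lambda$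 ($\mathsf{P}^{\dagger}A\to\mathsf{P}^{\dagger}B$). *)

theory Defs
  imports Main
begin

text \<open>A unital quantale: complete lattice with an associative multiplication
  (written *, the paper's &) with unit 1 (the paper's e), preserving arbitrary
  joins in each variable.\<close>

class unital_quantale = complete_lattice + monoid_mult +
  assumes quantale_Sup_distl: "x * Sup A = (SUP a\<in>A. x * a)"
  and quantale_Sup_distr: "Sup A * x = (SUP a\<in>A. a * x)"

text \<open>Implications: p * q \<le> r iff p \<le> r / q iff q \<le> p \ r.\<close>

definition rres :: "'q::unital_quantale \<Rightarrow> 'q \<Rightarrow> 'q" where
  "rres r q = Sup {p. p * q \<le> r}"

definition lres :: "'q::unital_quantale \<Rightarrow> 'q \<Rightarrow> 'q" where
  "lres p r = Sup {q. p * q \<le> r}"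

definition DQ :: "'q::unital_quantale \<Rightarrow> 'q \<Rightarrow> 'q set" where
  "DQ p q = {u. rres u p * p = u \<and> u = q * lres q u}"

record ('a, 'q) qsub =
  carr :: "'a set"
  nrm :: "'a \<Rightarrow> 'q"

record ('a, 'q) qpre = "('a, 'q) qsub" +
  prel :: "'a \<Rightarrow> 'a \<Rightarrow> 'q"

definition qone :: "'q \<Rightarrow> (unit, 'q) qsub" where
  "qone q = \<lparr>carr = {()}, nrm = (\<lambda>_. q)\<rparr>"

text \<open>Q-relations from X to Y, represented as functions that are \<open>bot\<close>
  outside the carriers (canonical representatives).\<close>

definition is_qrel :: "('a, 'q::unital_quantale, 'x) qsub_scheme \<Rightarrow> ('b, 'q, 'y) qsub_scheme
    \<Rightarrow> ('a \<Rightarrow> 'b \<Rightarrow> 'q) \<Rightarrow> bool" where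
  "is_qrel X Y \<phi> \<longleftrightarrow>
     (\<forall>x\<in>carr X. \<forall>y\<in>carr Y. \<phi> x y \<in> DQ (nrm X x) (nrm Y y)) \<and>
     (\<forall>x y. x \<notin> carr X \<or> y \<notin> carr Y \<longrightarrow> \<phi> x y = bot)"

definition qrel_le :: "('a, 'q::unital_quantale, 'x) qsub_scheme \<Rightarrow> ('b, 'q, 'y) qsub_scheme
    \<Rightarrow> ('a \<Rightarrow> 'b \<Rightarrow> 'q) \<Rightarrow> ('a \<Rightarrow> 'b \<Rightarrow> 'q) \<Rightarrow> bool" where
  "qrel_le X Y \<phi> \<psi> \<longleftrightarrow> (\<forall>x\<in>carr X. \<forall>y\<in>carr Y. \<phi> x y \<le> \<psi> x y)"

definition qid :: "('a, 'q::unital_quantale, 'x) qsub_scheme \<Rightarrow> 'a \<Rightarrow> 'a \<Rightarrow> 'q" where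
  "qid X x x' = (if x \<in> carr X \<and> x = x' then nrm X x else bot)"

definition qcomp :: "('a, 'q::unital_quantale, 'x) qsub_scheme \<Rightarrow> ('b, 'q, 'y) qsub_scheme
    \<Rightarrow> ('c, 'q, 'z) qsub_scheme \<Rightarrow> ('b \<Rightarrow> 'c \<Rightarrow> 'q) \<Rightarrow> ('a \<Rightarrow> 'b \<Rightarrow> 'q) \<Rightarrow> 'a \<Rightarrow> 'c \<Rightarrow> 'q" where
  "qcomp X Y Z \<psi> \<phi> x z =
     (if x \<in> carr X \<and> z \<in> carr Z
      then Sup {rres (\<psi> y z) (nrm Y y) * \<phi> x y | y. y \<in> carr Y}
      else bot)"

definition qlift :: "('a, 'q::unital_quantale, 'x) qsub_scheme \<Rightarrow> ('b, 'q, 'y) qsub_scheme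
    \<Rightarrow> ('c, 'q, 'z) qsub_scheme \<Rightarrow> ('a \<Rightarrow> 'c \<Rightarrow> 'q) \<Rightarrow> ('a \<Rightarrow> 'b \<Rightarrow> 'q) \<Rightarrow> 'b \<Rightarrow> 'c \<Rightarrow> 'q" where
  "qlift X Y Z \<xi> \<phi> = (THE \<psi>. is_qrel Y Z \<psi> \<and> qrel_le X Z (qcomp X Y Z \<psi> \<phi>) \<xi> \<and>
      (\<forall>\<psi>'. is_qrel Y Z \<psi>' \<and> qrel_le X Z (qcomp X Y Z \<psi>' \<phi>) \<xi> \<longrightarrow> qrel_le Y Z \<psi>' \<psi>))"

definition qext :: "('a, 'q::unital_quantale, 'x) qsub_scheme \<Rightarrow> ('b, 'q, 'y) qsub_scheme
    \<Rightarrow> ('c, 'q, 'z) qsub_scheme \<Rightarrow> ('b \<Rightarrow> 'c \<Rightarrow> 'q) \<Rightarrow> ('a \<Rightarrow> 'c \<Rightarrow> 'q) \<Rightarrow> 'a \<Rightarrow> 'b \<Rightarrow> 'q" where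
  "qext X Y Z \<psi> \<xi> = (THE \<phi>. is_qrel X Y \<phi> \<and> qrel_le X Z (qcomp X Y Z \<psi> \<phi>) \<xi> \<and>
      (\<forall>\<phi>'. is_qrel X Y \<phi>' \<and> qrel_le X Z (qcomp X Y Z \<psi> \<phi>') \<xi> \<longrightarrow> qrel_le X Y \<phi>' \<phi>))"

definition is_qpre :: "('a, 'q::unital_quantale, 'x) qpre_scheme \<Rightarrow> bool" where
  "is_qpre X \<longleftrightarrow> is_qrel X X (prel X) \<and> qrel_le X X (qid X) (prel X) \<and>
     qrel_le X X (qcomp X X X (prel X) (prel X)) (prel X)"

definition is_qdist :: "('a, 'q::unital_quantale, 'x) qpre_scheme \<Rightarrow> ('b, 'q, 'y) qpre_scheme
    \<Rightarrow> ('a \<Rightarrow> 'b \<Rightarrow> 'q) \<Rightarrow> bool" where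
  "is_qdist X Y \<phi> \<longleftrightarrow> is_qrel X Y \<phi> \<and>
     qrel_le X Y (qcomp X Y Y (prel Y) (qcomp X X Y \<phi> (prel X))) \<phi>"

definition PX :: "('a, 'q::unital_quantale, 'x) qpre_scheme \<Rightarrow> ('q \<times> ('a \<Rightarrow> unit \<Rightarrow> 'q), 'q) qpre" where
  "PX X = (let C = {(q, \<mu>). is_qrel X (qone q) \<mu> \<and>
                   qrel_le X (qone q) (qcomp X X (qone q) \<mu> (prel X)) \<mu>}
    in \<lparr>carr = C, nrm = fst,
        prel = (\<lambda>(q, \<mu>) (q', \<mu>'). if (q, \<mu>) \<in> C \<and> (q', \<mu>') \<in> C
                  then qlift X (qone q) (qone q') \<mu>' \<mu> () () else bot)\<rparr>)"

definition PdX :: "('a, 'q::unital_quantale, 'x) qpre_scheme \<Rightarrow> ('q \<times> (unit \<Rightarrow> 'a \<Rightarrow> 'q), 'q) qpre" where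
  "PdX X = (let C = {(q, l). is_qrel (qone q) X l \<and>
                   qrel_le (qone q) X (qcomp (qone q) X X (prel X) l) l}
    in \<lparr>carr = C, nrm = fst,
        prel = (\<lambda>(q, l) (q', l'). if (q, l) \<in> C \<and> (q', l') \<in> C
                  then qext (qone q) (qone q') X l' l () () else bot)\<rparr>)"

definition is_qmono :: "('a, 'q::unital_quantale, 'x) qpre_scheme \<Rightarrow> ('b, 'q, 'y) qpre_scheme
    \<Rightarrow> ('a \<Rightarrow> 'b) \<Rightarrow> bool" where
  "is_qmono A B h \<longleftrightarrow> (\<forall>a\<in>carr A. h a \<in> carr B \<and> nrm B (h a) = nrm A a) \<and>
     (\<forall>a\<in>carr A. \<forall>a'\<in>carr A. prel A a a' \<le> prel B (h a) (h a'))"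

definition qmap_le :: "('a, 'q::unital_quantale, 'x) qpre_scheme \<Rightarrow> ('b, 'q, 'y) qpre_scheme
    \<Rightarrow> ('a \<Rightarrow> 'b) \<Rightarrow> ('a \<Rightarrow> 'b) \<Rightarrow> bool" where
  "qmap_le A B h k \<longleftrightarrow> (\<forall>a\<in>carr A. nrm A a \<le> prel B (h a) (k a))"

definition qgalois :: "('a, 'q::unital_quantale, 'x) qpre_scheme \<Rightarrow> ('b, 'q, 'y) qpre_scheme
    \<Rightarrow> ('a \<Rightarrow> 'b) \<Rightarrow> ('b \<Rightarrow> 'a) \<Rightarrow> bool" where
  "qgalois A B h k \<longleftrightarrow> is_qmono A B h \<and> is_qmono B A k \<and>
     qmap_le A A id (k \<circ> h) \<and> qmap_le B B (h \<circ> k) id"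

definition d_up :: "('a, 'q::unital_quantale, 'x) qpre_scheme \<Rightarrow> ('b, 'q, 'y) qpre_scheme
    \<Rightarrow> ('a \<Rightarrow> 'b \<Rightarrow> 'q) \<Rightarrow> 'q \<times> ('a \<Rightarrow> unit \<Rightarrow> 'q) \<Rightarrow> 'q \<times> (unit \<Rightarrow> 'b \<Rightarrow> 'q)" where
  "d_up A B \<phi> = (\<lambda>(q, \<mu>). (q, qlift A (qone q) B \<phi> \<mu>))"

definition d_down :: "('a, 'q::unital_quantale, 'x) qpre_scheme \<Rightarrow> ('b, 'q, 'y) qpre_scheme
    \<Rightarrow> ('a \<Rightarrow> 'b \<Rightarrow> 'q) \<Rightarrow> 'q \<times> (unit \<Rightarrow> 'b \<Rightarrow> 'q) \<Rightarrow> 'q \<times> ('a \<Rightarrow> unit \<Rightarrow> 'q)" where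
  "d_down A B \<phi> = (\<lambda>(q, l). (q, qext A (qone q) B l \<phi>))"

definition d_star_up :: "('a, 'q::unital_quantale, 'x) qpre_scheme \<Rightarrow> ('b, 'q, 'y) qpre_scheme
    \<Rightarrow> ('a \<Rightarrow> 'b \<Rightarrow> 'q) \<Rightarrow> 'q \<times> ('b \<Rightarrow> unit \<Rightarrow> 'q) \<Rightarrow> 'q \<times> ('a \<Rightarrow> unit \<Rightarrow> 'q)" where
  "d_star_up A B \<phi> = (\<lambda>(q, \<mu>). (q, qcomp A B (qone q) \<mu> \<phi>))"

definition d_star_low :: "('a, 'q::unital_quantale, 'x) qpre_scheme \<Rightarrow> ('b, 'q, 'y) qpre_scheme
    \<Rightarrow> ('a \<Rightarrow> 'b \<Rightarrow> 'q) \<Rightarrow> 'q \<times> ('a \<Rightarrow> unit \<Rightarrow> 'q) \<Rightarrow> 'q \<times> ('b \<Rightarrow> unit \<Rightarrow> 'q)" where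
  "d_star_low A B \<phi> = (\<lambda>(q, \<mu>). (q, qlift A B (qone q) \<mu> \<phi>))"

definition d_dag_low :: "('a, 'q::unital_quantale, 'x) qpre_scheme \<Rightarrow> ('b, 'q, 'y) qpre_scheme
    \<Rightarrow> ('a \<Rightarrow> 'b \<Rightarrow> 'q) \<Rightarrow> 'q \<times> (unit \<Rightarrow> 'b \<Rightarrow> 'q) \<Rightarrow> 'q \<times> (unit \<Rightarrow> 'a \<Rightarrow> 'q)" where
  "d_dag_low A B \<phi> = (\<lambda>(q, l). (q, qext (qone q) A B \<phi> l))"

definition d_dag_up :: "('a, 'q::unital_quantale, 'x) qpre_scheme \<Rightarrow> ('b, 'q, 'y) qpre_scheme
    \<Rightarrow> ('a \<Rightarrow> 'b \<Rightarrow> 'q) \<Rightarrow> 'q \<times> (unit \<Rightarrow> 'a \<Rightarrow> 'q) \<Rightarrow> 'q \<times> (unit \<Rightarrow> 'b \<Rightarrow> 'q)" where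
  "d_dag_up A B \<phi> = (\<lambda>(q, l). (q, qcomp (qone q) A B \<phi> l))"

end

(* For a polarity or an axiality f -| g the distributor is read off from the left adjoint on
   representables, phi(x, y) = f(yoneda x)(y); for a dual axiality it is read off from the right
   adjoint on corepresentables, phi(y, x) = g(coyoneda y)(x).  The two distributor inequalities are
   the (co)presheaf property of these values and the Q-monotonicity of the adjoint applied to
   1_X(x, x') <= 1_PX(yoneda x, yoneda x').

   Every presheaf mu is the mu-weighted join of representables, and a left adjoint preserves such
   joins; this identifies f with phi_up (resp. phi^* ), and dually g with phi^dagger.  The other
   adjoint is then forced: on elements of equal norm the relation |a| <= 1_PX(a, b) is the pointwise
   order, which is antisymmetric, and for it phi_up -| phi^down, phi^* -| phi_* and
   phi_dagger -| phi^dagger hold by the residuation properties of lifts and extensions. *)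

theory Submission
  imports Defs
begin

section \<open>Residuation in the quantale\<close>

lemma SUP_mult_distr: "(SUP i\<in>I. f i) * (c::'q::unital_quantale) = (SUP i\<in>I. f i * c)"
  by (simp add: quantale_Sup_distr image_image)

lemma mult_SUP_distr: "(c::'q::unital_quantale) * (SUP i\<in>I. f i) = (SUP i\<in>I. c * f i)"
  by (simp add: quantale_Sup_distl image_image)

lemma quantale_mult_right_mono: "b \<le> c \<Longrightarrow> (a::'q::unital_quantale) * b \<le> a * c"
  using quantale_Sup_distl[of a "{b, c}"] by (simp add: sup_absorb2 sup.absorb_iff2)

lemma quantale_mult_left_mono: "b \<le> c \<Longrightarrow> b * (a::'q::unital_quantale) \<le> c * a"
  using quantale_Sup_distr[of "{b, c}" a] by (simp add: sup_absorb2 sup.absorb_iff2)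

lemma rres_mult_le: "rres r q * q \<le> (r::'q::unital_quantale)"
  unfolding rres_def by (simp add: quantale_Sup_distr SUP_le_iff)

lemma lres_mult_le: "p * lres p r \<le> (r::'q::unital_quantale)"
  unfolding lres_def by (simp add: quantale_Sup_distl SUP_le_iff)

lemma le_rres_iff: "p \<le> rres r q \<longleftrightarrow> p * q \<le> (r::'q::unital_quantale)"
  by (metis (no_types, lifting) CollectI Sup_upper order_trans quantale_mult_left_mono
      rres_def rres_mult_le)

lemma le_lres_iff: "q \<le> lres p r \<longleftrightarrow> p * q \<le> (r::'q::unital_quantale)"
  by (metis (no_types, lifting) CollectI Sup_upper order_trans quantale_mult_right_mono
      lres_def lres_mult_le)

lemma rres_mono: "a \<le> b \<Longrightarrow> rres a q \<le> rres (b::'q::unital_quantale) q"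
  using le_rres_iff order_trans rres_mult_le by blast

lemma DQ_iff: "u \<in> DQ p q \<longleftrightarrow> (\<exists>a. u = a * p) \<and> (\<exists>b. u = q * (b::'q::unital_quantale))"
proof
  assume "(\<exists>a. u = a * p) \<and> (\<exists>b. u = q * b)"
  then obtain a b where a: "u = a * p" and b: "u = q * b" by blast
  have "a \<le> rres u p" using a by (simp add: le_rres_iff)
  then have "u \<le> rres u p * p" unfolding a by (rule quantale_mult_left_mono)
  then have "rres u p * p = u" using rres_mult_le by (rule antisym[rotated])
  moreover have "b \<le> lres q u" using b by (simp add: le_lres_iff)
  then have "u \<le> q * lres q u" unfolding b by (rule quantale_mult_right_mono)
  then have "q * lres q u = u" using lres_mult_le by (rule antisym[rotated])
  ultimately show "u \<in> DQ p q" unfolding DQ_def by simp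
next
  assume "u \<in> DQ p q"
  then have "u = rres u p * p" and "u = q * lres q u" unfolding DQ_def by auto
  then show "(\<exists>a. u = a * p) \<and> (\<exists>b. u = q * b)" by blast
qed

lemma DQ_rres: "u \<in> DQ p q \<Longrightarrow> rres u p * p = u"
  unfolding DQ_def by simp

lemma DQ_lres: "u \<in> DQ p q \<Longrightarrow> q * lres q u = (u::'q::unital_quantale)"
  unfolding DQ_def by simp

lemma DQ_refl [simp]: "(p::'q::unital_quantale) \<in> DQ p p"
  unfolding DQ_iff using mult_1_left[of p, symmetric] mult_1_right[of p, symmetric] by blast

lemma DQ_SUP: "(\<And>i. i \<in> I \<Longrightarrow> f i \<in> DQ p q) \<Longrightarrow> (SUP i\<in>I. f i) \<in> DQ p (q::'q::unital_quantale)"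
proof -
  assume f: "\<And>i. i \<in> I \<Longrightarrow> f i \<in> DQ p q"
  have "(SUP i\<in>I. f i) = (SUP i\<in>I. rres (f i) p) * p"
    unfolding SUP_mult_distr using f by (intro SUP_cong) (auto dest: DQ_rres[symmetric])
  moreover have "(SUP i\<in>I. f i) = q * (SUP i\<in>I. lres q (f i))"
    unfolding mult_SUP_distr using f by (intro SUP_cong) (auto dest: DQ_lres[symmetric])
  ultimately show ?thesis unfolding DQ_iff by blast
qed

lemma DQ_rres_mult_eq_mult_lres: "u \<in> DQ p q \<Longrightarrow> v \<in> DQ q r \<Longrightarrow> rres v q * u = v * lres q (u::'q::unital_quantale)"
  by (metis DQ_lres DQ_rres mult.assoc)

lemma DQ_rres_mult:
  assumes u: "u \<in> DQ p q" and v: "v \<in> DQ q r"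
  shows "rres v q * u \<in> DQ p (r::'q::unital_quantale)"
proof -
  have "rres v q * u = (rres v q * rres u p) * p"
    using DQ_rres[OF u] by (metis mult.assoc)
  moreover have "rres v q * u = r * (lres r v * lres q u)"
    using DQ_rres_mult_eq_mult_lres[OF u v] DQ_lres[OF v] by (metis mult.assoc)
  ultimately show ?thesis unfolding DQ_iff by blast
qed

lemma DQ_unit_left: "u \<in> DQ p q \<Longrightarrow> rres q q * u = (u::'q::unital_quantale)"
  using DQ_rres_mult_eq_mult_lres[of u p q q q] DQ_lres[of u p q] by simp

section \<open>Composition of Q-relations\<close>

lemma qcomp_in: "x \<in> carr X \<Longrightarrow> z \<in> carr Z \<Longrightarrow>
  qcomp X Y Z \<psi> \<phi> x z = (SUP y\<in>carr Y. rres (\<psi> y z) (nrm Y y) * \<phi> x y)"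
  unfolding qcomp_def by (simp add: Setcompr_eq_image)

lemma qcomp_out: "\<not> (x \<in> carr X \<and> z \<in> carr Z) \<Longrightarrow> qcomp X Y Z \<psi> \<phi> x z = bot"
  unfolding qcomp_def by auto

lemma qrel_DQ: "is_qrel X Y \<phi> \<Longrightarrow> x \<in> carr X \<Longrightarrow> y \<in> carr Y \<Longrightarrow> \<phi> x y \<in> DQ (nrm X x) (nrm Y y)"
  unfolding is_qrel_def by blast

lemma qrel_out: "is_qrel X Y \<phi> \<Longrightarrow> \<not> (x \<in> carr X \<and> y \<in> carr Y) \<Longrightarrow> \<phi> x y = bot"
  unfolding is_qrel_def by blast

lemma qrel_leD: "qrel_le X Y \<phi> \<psi> \<Longrightarrow> x \<in> carr X \<Longrightarrow> y \<in> carr Y \<Longrightarrow> \<phi> x y \<le> \<psi> x y"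
  unfolding qrel_le_def by blast

lemma qrel_le_trans: "qrel_le X Y \<phi> \<psi> \<Longrightarrow> qrel_le X Y \<psi> \<chi> \<Longrightarrow> qrel_le X Y \<phi> \<chi>"
  unfolding qrel_le_def by (meson order_trans)

lemma qrel_eqI: "is_qrel X Y \<phi> \<Longrightarrow> is_qrel X Y \<psi> \<Longrightarrow> qrel_le X Y \<phi> \<psi> \<Longrightarrow> qrel_le X Y \<psi> \<phi> \<Longrightarrow> \<phi> = \<psi>"
proof (intro ext)
  fix x y
  assume "is_qrel X Y \<phi>" "is_qrel X Y \<psi>" "qrel_le X Y \<phi> \<psi>" "qrel_le X Y \<psi> \<phi>"
  then show "\<phi> x y = \<psi> x y"
    by (cases "x \<in> carr X \<and> y \<in> carr Y") (auto simp: qrel_out intro: antisym dest: qrel_leD)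
qed

lemma qcomp_in_lres: "is_qrel X Y \<phi> \<Longrightarrow> is_qrel Y Z \<psi> \<Longrightarrow> x \<in> carr X \<Longrightarrow> z \<in> carr Z \<Longrightarrow>
  qcomp X Y Z \<psi> \<phi> x z = (SUP y\<in>carr Y. \<psi> y z * lres (nrm Y y) (\<phi> x y))"
  unfolding qcomp_in by (rule SUP_cong) (auto intro: DQ_rres_mult_eq_mult_lres qrel_DQ)

lemma is_qrel_qcomp: "is_qrel X Y \<phi> \<Longrightarrow> is_qrel Y Z \<psi> \<Longrightarrow> is_qrel X Z (qcomp X Y Z \<psi> \<phi>)"
  unfolding is_qrel_def[of X Z]
  by (auto simp: qcomp_in qcomp_out intro!: DQ_SUP DQ_rres_mult qrel_DQ)

lemma qcomp_mono_left: "qrel_le Y Z \<psi> \<psi>' \<Longrightarrow> qrel_le X Z (qcomp X Y Z \<psi> \<phi>) (qcomp X Y Z \<psi>' \<phi>)"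
  unfolding qrel_le_def[of X Z]
  by (auto simp: qcomp_in qrel_leD intro!: SUP_mono bexI quantale_mult_left_mono rres_mono)

lemma qcomp_mono_right: "qrel_le X Y \<phi> \<phi>' \<Longrightarrow> qrel_le X Z (qcomp X Y Z \<psi> \<phi>) (qcomp X Y Z \<psi> \<phi>')"
  unfolding qrel_le_def[of X Z]
  by (auto simp: qcomp_in qrel_leD intro!: SUP_mono bexI quantale_mult_right_mono)

lemma qcomp_assoc:
  assumes \<phi>: "is_qrel X Y \<phi>" and \<psi>: "is_qrel Y Z \<psi>" and \<chi>: "is_qrel Z W \<chi>"
  shows "qcomp X Y W (qcomp Y Z W \<chi> \<psi>) \<phi> = qcomp X Z W \<chi> (qcomp X Y Z \<psi> \<phi>)"
proof (intro ext)
  fix x w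
  show "qcomp X Y W (qcomp Y Z W \<chi> \<psi>) \<phi> x w = qcomp X Z W \<chi> (qcomp X Y Z \<psi> \<phi>) x w"
  proof (cases "x \<in> carr X \<and> w \<in> carr W")
    case True
    then have x: "x \<in> carr X" and w: "w \<in> carr W" by auto
    have "qcomp X Y W (qcomp Y Z W \<chi> \<psi>) \<phi> x w
        = (SUP y\<in>carr Y. qcomp Y Z W \<chi> \<psi> y w * lres (nrm Y y) (\<phi> x y))"
      using qcomp_in_lres[OF \<phi> is_qrel_qcomp[OF \<psi> \<chi>] x w] .
    also have "\<dots> = (SUP y\<in>carr Y. SUP z\<in>carr Z.
        rres (\<chi> z w) (nrm Z z) * (\<psi> y z * lres (nrm Y y) (\<phi> x y)))"
      by (rule SUP_cong) (simp_all add: qcomp_in w SUP_mult_distr mult.assoc)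
    also have "\<dots> = (SUP z\<in>carr Z. SUP y\<in>carr Y.
        rres (\<chi> z w) (nrm Z z) * (\<psi> y z * lres (nrm Y y) (\<phi> x y)))"
      by (rule SUP_commute)
    also have "\<dots> = (SUP z\<in>carr Z. rres (\<chi> z w) (nrm Z z) * qcomp X Y Z \<psi> \<phi> x z)"
      by (rule SUP_cong[OF refl]) (simp add: qcomp_in_lres[OF \<phi> \<psi> x] mult_SUP_distr)
    also have "\<dots> = qcomp X Z W \<chi> (qcomp X Y Z \<psi> \<phi>) x w"
      by (rule qcomp_in[OF x w, symmetric])
    finally show ?thesis .
  qed (auto simp: qcomp_out)
qed

section \<open>Lifts and extensions as pointwise joins\<close>

definition qrel_Sup :: "('a, 'q::unital_quantale, 'x) qsub_scheme \<Rightarrow> ('b, 'q, 'y) qsub_scheme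
    \<Rightarrow> ('a \<Rightarrow> 'b \<Rightarrow> 'q) set \<Rightarrow> 'a \<Rightarrow> 'b \<Rightarrow> 'q" where
  "qrel_Sup X Y S x y = (if x \<in> carr X \<and> y \<in> carr Y then SUP \<phi>\<in>S. \<phi> x y else bot)"

lemma is_qrel_qrel_Sup: "(\<And>\<phi>. \<phi> \<in> S \<Longrightarrow> is_qrel X Y \<phi>) \<Longrightarrow> is_qrel X Y (qrel_Sup X Y S)"
  unfolding is_qrel_def[of X Y "qrel_Sup X Y S"] qrel_Sup_def by (auto intro!: DQ_SUP qrel_DQ)

lemma qrel_le_qrel_Sup: "\<phi> \<in> S \<Longrightarrow> qrel_le X Y \<phi> (qrel_Sup X Y S)"
  unfolding qrel_le_def qrel_Sup_def by (auto intro: SUP_upper)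

lemma qcomp_qrel_Sup_left_le:
  assumes \<phi>: "is_qrel X Y \<phi>"
    and S: "\<And>\<psi>. \<psi> \<in> S \<Longrightarrow> is_qrel Y Z \<psi> \<and> qrel_le X Z (qcomp X Y Z \<psi> \<phi>) \<xi>"
  shows "qrel_le X Z (qcomp X Y Z (qrel_Sup Y Z S) \<phi>) \<xi>"
  unfolding qrel_le_def
proof (intro ballI)
  fix x z assume x: "x \<in> carr X" and z: "z \<in> carr Z"
  have "qcomp X Y Z (qrel_Sup Y Z S) \<phi> x z
      = (SUP y\<in>carr Y. SUP \<psi>\<in>S. \<psi> y z * lres (nrm Y y) (\<phi> x y))"
    using qcomp_in_lres[OF \<phi> is_qrel_qrel_Sup x z] S
    by (simp add: qrel_Sup_def z SUP_mult_distr cong: SUP_cong)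
  also have "\<dots> = (SUP \<psi>\<in>S. qcomp X Y Z \<psi> \<phi> x z)"
    using S by (simp add: SUP_commute[of _ "carr Y"] qcomp_in_lres[OF \<phi> _ x z] cong: SUP_cong)
  also have "\<dots> \<le> \<xi> x z"
    using S x z by (auto intro!: SUP_least dest: qrel_leD)
  finally show "qcomp X Y Z (qrel_Sup Y Z S) \<phi> x z \<le> \<xi> x z" .
qed

lemma qcomp_qrel_Sup_right_le:
  assumes S: "\<And>\<phi>. \<phi> \<in> S \<Longrightarrow> qrel_le X Z (qcomp X Y Z \<psi> \<phi>) \<xi>"
  shows "qrel_le X Z (qcomp X Y Z \<psi> (qrel_Sup X Y S)) \<xi>"
  unfolding qrel_le_def
proof (intro ballI)
  fix x z assume x: "x \<in> carr X" and z: "z \<in> carr Z"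
  have "qcomp X Y Z \<psi> (qrel_Sup X Y S) x z = (SUP \<phi>\<in>S. qcomp X Y Z \<psi> \<phi> x z)"
    by (simp add: qcomp_in x z qrel_Sup_def mult_SUP_distr SUP_commute[of _ S] cong: SUP_cong)
  also have "\<dots> \<le> \<xi> x z"
    using S x z by (auto intro!: SUP_least dest: qrel_leD)
  finally show "qcomp X Y Z \<psi> (qrel_Sup X Y S) x z \<le> \<xi> x z" .
qed

lemma the_greatest_qrel:
  assumes "is_qrel X Y L" and "P L" and "\<And>\<phi>. is_qrel X Y \<phi> \<Longrightarrow> P \<phi> \<Longrightarrow> qrel_le X Y \<phi> L"
  shows "(THE \<phi>. is_qrel X Y \<phi> \<and> P \<phi> \<and> (\<forall>\<phi>'. is_qrel X Y \<phi>' \<and> P \<phi>' \<longrightarrow> qrel_le X Y \<phi>' \<phi>)) = L"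
  using assms by (intro the_equality) (auto intro: qrel_eqI)

lemma qlift_eq:
  assumes \<phi>: "is_qrel X Y \<phi>"
  shows "qlift X Y Z \<xi> \<phi> = qrel_Sup Y Z {\<psi>. is_qrel Y Z \<psi> \<and> qrel_le X Z (qcomp X Y Z \<psi> \<phi>) \<xi>}"
  unfolding qlift_def
  by (rule the_greatest_qrel)
    (auto intro: is_qrel_qrel_Sup qcomp_qrel_Sup_left_le[OF \<phi>] qrel_le_qrel_Sup)

lemma is_qrel_qlift: "is_qrel X Y \<phi> \<Longrightarrow> is_qrel Y Z (qlift X Y Z \<xi> \<phi>)"
  unfolding qlift_eq by (rule is_qrel_qrel_Sup) simp

lemma qcomp_qlift_le: "is_qrel X Y \<phi> \<Longrightarrow> qrel_le X Z (qcomp X Y Z (qlift X Y Z \<xi> \<phi>) \<phi>) \<xi>"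
  unfolding qlift_eq by (rule qcomp_qrel_Sup_left_le) simp_all

lemma qrel_le_qlift_iff:
  assumes \<phi>: "is_qrel X Y \<phi>" and \<psi>: "is_qrel Y Z \<psi>"
  shows "qrel_le Y Z \<psi> (qlift X Y Z \<xi> \<phi>) \<longleftrightarrow> qrel_le X Z (qcomp X Y Z \<psi> \<phi>) \<xi>"
proof
  assume "qrel_le Y Z \<psi> (qlift X Y Z \<xi> \<phi>)"
  then show "qrel_le X Z (qcomp X Y Z \<psi> \<phi>) \<xi>"
    using qcomp_mono_left qcomp_qlift_le[OF \<phi>] qrel_le_trans by blast
next
  assume "qrel_le X Z (qcomp X Y Z \<psi> \<phi>) \<xi>"
  then show "qrel_le Y Z \<psi> (qlift X Y Z \<xi> \<phi>)"
    unfolding qlift_eq[OF \<phi>] using \<psi> by (intro qrel_le_qrel_Sup) simp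
qed

lemma qext_eq:
  assumes \<psi>: "is_qrel Y Z \<psi>"
  shows "qext X Y Z \<psi> \<xi> = qrel_Sup X Y {\<phi>. is_qrel X Y \<phi> \<and> qrel_le X Z (qcomp X Y Z \<psi> \<phi>) \<xi>}"
  unfolding qext_def
  by (rule the_greatest_qrel)
    (auto intro: is_qrel_qrel_Sup qcomp_qrel_Sup_right_le qrel_le_qrel_Sup)

lemma is_qrel_qext: "is_qrel Y Z \<psi> \<Longrightarrow> is_qrel X Y (qext X Y Z \<psi> \<xi>)"
  unfolding qext_eq by (rule is_qrel_qrel_Sup) simp

lemma qcomp_qext_le: "is_qrel Y Z \<psi> \<Longrightarrow> qrel_le X Z (qcomp X Y Z \<psi> (qext X Y Z \<psi> \<xi>)) \<xi>"
  unfolding qext_eq by (rule qcomp_qrel_Sup_right_le) simp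

lemma qrel_le_qext_iff:
  assumes \<psi>: "is_qrel Y Z \<psi>" and \<phi>: "is_qrel X Y \<phi>"
  shows "qrel_le X Y \<phi> (qext X Y Z \<psi> \<xi>) \<longleftrightarrow> qrel_le X Z (qcomp X Y Z \<psi> \<phi>) \<xi>"
proof
  assume "qrel_le X Y \<phi> (qext X Y Z \<psi> \<xi>)"
  then show "qrel_le X Z (qcomp X Y Z \<psi> \<phi>) \<xi>"
    using qcomp_mono_right qcomp_qext_le[OF \<psi>] qrel_le_trans by blast
next
  assume "qrel_le X Z (qcomp X Y Z \<psi> \<phi>) \<xi>"
  then show "qrel_le X Y \<phi> (qext X Y Z \<psi> \<xi>)"
    unfolding qext_eq[OF \<psi>] using \<phi> by (intro qrel_le_qrel_Sup) simp
qed

section \<open>Presheaves and copresheaves\<close>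

lemma carr_qone [simp]: "carr (qone q) = {()}"
  by (simp add: qone_def)

lemma nrm_qone [simp]: "nrm (qone q) u = q"
  by (simp add: qone_def)

lemma is_qrel_qone_iff: "is_qrel (qone q) (qone q') (\<lambda>_ _. t) \<longleftrightarrow> t \<in> DQ q q'"
  unfolding is_qrel_def by simp

lemma qrel_le_qone_iff: "qrel_le (qone q) (qone q') \<phi> \<psi> \<longleftrightarrow> \<phi> () () \<le> \<psi> () ()"
  unfolding qrel_le_def by simp

lemma qrel_le_into_qone_iff: "qrel_le X (qone q) \<mu> \<nu> \<longleftrightarrow> (\<forall>x\<in>carr X. \<mu> x () \<le> \<nu> x ())"
  unfolding qrel_le_def by simp

lemma qrel_le_from_qone_iff: "qrel_le (qone q) X l l' \<longleftrightarrow> (\<forall>x\<in>carr X. l () x \<le> l' () x)"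
  unfolding qrel_le_def by simp

lemma mem_PX_iff: "a \<in> carr (PX X) \<longleftrightarrow> is_qrel X (qone (fst a)) (snd a) \<and>
   qrel_le X (qone (fst a)) (qcomp X X (qone (fst a)) (snd a) (prel X)) (snd a)"
  by (cases a) (simp add: PX_def Let_def)

lemma nrm_PX [simp]: "nrm (PX X) = fst"
  by (simp add: PX_def Let_def)

lemma prel_PX: "a \<in> carr (PX X) \<Longrightarrow> b \<in> carr (PX X) \<Longrightarrow>
  prel (PX X) a b = qlift X (qone (fst a)) (qone (fst b)) (snd b) (snd a) () ()"
  by (cases a, cases b) (simp add: PX_def Let_def)

lemma mem_PdX_iff: "a \<in> carr (PdX X) \<longleftrightarrow> is_qrel (qone (fst a)) X (snd a) \<and>
   qrel_le (qone (fst a)) X (qcomp (qone (fst a)) X X (prel X) (snd a)) (snd a)"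
  by (cases a) (simp add: PdX_def Let_def)

lemma nrm_PdX [simp]: "nrm (PdX X) = fst"
  by (simp add: PdX_def Let_def)

lemma prel_PdX: "a \<in> carr (PdX X) \<Longrightarrow> b \<in> carr (PdX X) \<Longrightarrow>
  prel (PdX X) a b = qext (qone (fst a)) (qone (fst b)) X (snd b) (snd a) () ()"
  by (cases a, cases b) (simp add: PdX_def Let_def)

lemma PX_DQ: "a \<in> carr (PX X) \<Longrightarrow> x \<in> carr X \<Longrightarrow> snd a x () \<in> DQ (nrm X x) (fst a)"
  unfolding mem_PX_iff using qrel_DQ by fastforce

lemma PdX_DQ: "a \<in> carr (PdX X) \<Longrightarrow> x \<in> carr X \<Longrightarrow> snd a () x \<in> DQ (fst a) (nrm X x)"
  unfolding mem_PdX_iff using qrel_DQ by fastforce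

lemma PX_presheaf:
  assumes a: "a \<in> carr (PX X)" and x: "x \<in> carr X" and x': "x' \<in> carr X"
  shows "rres (snd a x ()) (nrm X x) * prel X x' x \<le> snd a x' ()"
proof -
  have "rres (snd a x ()) (nrm X x) * prel X x' x \<le> qcomp X X (qone (fst a)) (snd a) (prel X) x' ()"
    using x x' by (auto simp: qcomp_in intro: SUP_upper2)
  also have "\<dots> \<le> snd a x' ()"
    using a x' unfolding mem_PX_iff by (auto dest: qrel_leD)
  finally show ?thesis .
qed

lemma PdX_copresheaf:
  assumes a: "a \<in> carr (PdX X)" and x: "x \<in> carr X" and x': "x' \<in> carr X"
  shows "rres (prel X x x') (nrm X x) * snd a () x \<le> snd a () x'"
proof -
  have "rres (prel X x x') (nrm X x) * snd a () x \<le> qcomp (qone (fst a)) X X (prel X) (snd a) () x'"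
    using x x' by (auto simp: qcomp_in intro: SUP_upper2)
  also have "\<dots> \<le> snd a () x'"
    using a x' unfolding mem_PdX_iff by (auto dest: qrel_leD)
  finally show ?thesis .
qed

lemma le_prel_PX_iff:
  assumes a: "a \<in> carr (PX X)" and b: "b \<in> carr (PX X)" and t: "t \<in> DQ (fst a) (fst b)"
  shows "t \<le> prel (PX X) a b \<longleftrightarrow> (\<forall>x\<in>carr X. rres t (fst a) * snd a x () \<le> snd b x ())"
proof -
  have "t \<le> prel (PX X) a b \<longleftrightarrow>
      qrel_le (qone (fst a)) (qone (fst b)) (\<lambda>_ _. t) (qlift X (qone (fst a)) (qone (fst b)) (snd b) (snd a))"
    using a b by (simp add: prel_PX qrel_le_qone_iff)
  also have "\<dots> \<longleftrightarrow> qrel_le X (qone (fst b)) (qcomp X (qone (fst a)) (qone (fst b)) (\<lambda>_ _. t) (snd a)) (snd b)"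
    using a t by (simp add: qrel_le_qlift_iff mem_PX_iff is_qrel_qone_iff)
  finally show ?thesis
    by (simp add: qrel_le_def qcomp_in)
qed

lemma le_prel_PdX_iff:
  assumes a: "a \<in> carr (PdX X)" and b: "b \<in> carr (PdX X)" and t: "t \<in> DQ (fst a) (fst b)"
  shows "t \<le> prel (PdX X) a b \<longleftrightarrow> (\<forall>x\<in>carr X. rres (snd b () x) (fst b) * t \<le> snd a () x)"
proof -
  have "t \<le> prel (PdX X) a b \<longleftrightarrow>
      qrel_le (qone (fst a)) (qone (fst b)) (\<lambda>_ _. t) (qext (qone (fst a)) (qone (fst b)) X (snd b) (snd a))"
    using a b by (simp add: prel_PdX qrel_le_qone_iff)
  also have "\<dots> \<longleftrightarrow> qrel_le (qone (fst a)) X (qcomp (qone (fst a)) (qone (fst b)) X (snd b) (\<lambda>_ _. t)) (snd a)"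
    using b t by (simp add: qrel_le_qext_iff mem_PdX_iff is_qrel_qone_iff)
  finally show ?thesis
    by (simp add: qrel_le_def qcomp_in)
qed

section \<open>Galois connections and the underlying order\<close>

definition underlying_le :: "('a, 'q::unital_quantale, 'x) qpre_scheme \<Rightarrow> 'a \<Rightarrow> 'a \<Rightarrow> bool" where
  "underlying_le A a b \<longleftrightarrow> nrm A a = nrm A b \<and> nrm A a \<le> prel A a b"

lemma underlying_le_PX_iff:
  assumes a: "a \<in> carr (PX X)" and b: "b \<in> carr (PX X)"
  shows "underlying_le (PX X) a b \<longleftrightarrow> fst a = fst b \<and> (\<forall>x\<in>carr X. snd a x () \<le> snd b x ())"
proof -
  have "rres (fst a) (fst a) * snd a x () = snd a x ()" if "x \<in> carr X" for x
    using DQ_unit_left[OF PX_DQ[OF a that]] .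
  then show ?thesis
    unfolding underlying_le_def using le_prel_PX_iff[OF a b, of "fst a"] by auto
qed

lemma underlying_le_PdX_iff:
  assumes a: "a \<in> carr (PdX X)" and b: "b \<in> carr (PdX X)"
  shows "underlying_le (PdX X) a b \<longleftrightarrow> fst a = fst b \<and> (\<forall>x\<in>carr X. snd b () x \<le> snd a () x)"
proof -
  have "rres (snd b () x) (fst b) * fst b = snd b () x" if "x \<in> carr X" for x
    using DQ_rres[OF PdX_DQ[OF b that]] .
  then show ?thesis
    unfolding underlying_le_def using le_prel_PdX_iff[OF a b, of "fst a"] by auto
qed

lemma PX_eqI:
  assumes "a \<in> carr (PX X)" and "b \<in> carr (PX X)" and "fst a = fst b"
    and "\<And>x. x \<in> carr X \<Longrightarrow> snd a x () = snd b x ()"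
  shows "a = b"
  using assms unfolding mem_PX_iff
  by (intro prod_eqI) (auto simp: qrel_le_def intro: qrel_eqI)

lemma PdX_eqI:
  assumes "a \<in> carr (PdX X)" and "b \<in> carr (PdX X)" and "fst a = fst b"
    and "\<And>x. x \<in> carr X \<Longrightarrow> snd a () x = snd b () x"
  shows "a = b"
  using assms unfolding mem_PdX_iff
  by (intro prod_eqI) (auto simp: qrel_le_def intro: qrel_eqI)

lemma underlying_le_PX_order:
  shows "reflp_on (carr (PX X)) (underlying_le (PX X))"
    and "transp_on (carr (PX X)) (underlying_le (PX X))"
    and "antisymp_on (carr (PX X)) (underlying_le (PX X))"
proof -
  show "reflp_on (carr (PX X)) (underlying_le (PX X))"
    by (rule reflp_onI) (simp add: underlying_le_PX_iff)
  show "transp_on (carr (PX X)) (underlying_le (PX X))"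
    by (rule transp_onI) (auto simp: underlying_le_PX_iff intro: order_trans)
  show "antisymp_on (carr (PX X)) (underlying_le (PX X))"
  proof (rule antisymp_onI)
    fix a b
    assume "a \<in> carr (PX X)" "b \<in> carr (PX X)"
      "underlying_le (PX X) a b" "underlying_le (PX X) b a"
    then show "a = b" by (intro PX_eqI) (auto simp: underlying_le_PX_iff intro: antisym)
  qed
qed

lemma underlying_le_PdX_order:
  shows "reflp_on (carr (PdX X)) (underlying_le (PdX X))"
    and "transp_on (carr (PdX X)) (underlying_le (PdX X))"
    and "antisymp_on (carr (PdX X)) (underlying_le (PdX X))"
proof -
  show "reflp_on (carr (PdX X)) (underlying_le (PdX X))"
    by (rule reflp_onI) (simp add: underlying_le_PdX_iff)
  show "transp_on (carr (PdX X)) (underlying_le (PdX X))"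
    by (rule transp_onI) (auto simp: underlying_le_PdX_iff intro: order_trans)
  show "antisymp_on (carr (PdX X)) (underlying_le (PdX X))"
  proof (rule antisymp_onI)
    fix a b
    assume "a \<in> carr (PdX X)" "b \<in> carr (PdX X)"
      "underlying_le (PdX X) a b" "underlying_le (PdX X) b a"
    then show "a = b" by (intro PdX_eqI) (auto simp: underlying_le_PdX_iff intro: antisym)
  qed
qed

lemma qmono_mem: "is_qmono A B f \<Longrightarrow> a \<in> carr A \<Longrightarrow> f a \<in> carr B"
  unfolding is_qmono_def by blast

lemma qmono_nrm: "is_qmono A B f \<Longrightarrow> a \<in> carr A \<Longrightarrow> nrm B (f a) = nrm A a"
  unfolding is_qmono_def by blast

lemma qmono_prel: "is_qmono A B f \<Longrightarrow> a \<in> carr A \<Longrightarrow> a' \<in> carr A \<Longrightarrow> prel A a a' \<le> prel B (f a) (f a')"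
  unfolding is_qmono_def by blast

lemma qmono_underlying_le:
  "is_qmono A B f \<Longrightarrow> a \<in> carr A \<Longrightarrow> b \<in> carr A \<Longrightarrow> underlying_le A a b \<Longrightarrow> underlying_le B (f a) (f b)"
  unfolding underlying_le_def using qmono_nrm qmono_prel order_trans by fastforce

lemma qgalois_qmono:
  assumes "qgalois A B f g"
  shows "is_qmono A B f" and "is_qmono B A g"
  using assms unfolding qgalois_def by simp_all

lemma qgalois_unit:
  assumes G: "qgalois A B f g" and a: "a \<in> carr A"
  shows "underlying_le A a (g (f a))"
proof -
  note f = qgalois_qmono(1)[OF G] and g = qgalois_qmono(2)[OF G]
  have "nrm A a \<le> prel A a (g (f a))"
    using G a unfolding qgalois_def qmap_le_def by simp
  moreover have "nrm A (g (f a)) = nrm A a"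
    using qmono_nrm[OF g qmono_mem[OF f a]] qmono_nrm[OF f a] by simp
  ultimately show ?thesis unfolding underlying_le_def by simp
qed

lemma qgalois_counit:
  assumes G: "qgalois A B f g" and b: "b \<in> carr B"
  shows "underlying_le B (f (g b)) b"
proof -
  note f = qgalois_qmono(1)[OF G] and g = qgalois_qmono(2)[OF G]
  have "nrm B (f (g b)) \<le> prel B (f (g b)) b"
    using G b qmono_nrm[OF f qmono_mem[OF g b]] qmono_nrm[OF g b]
    unfolding qgalois_def qmap_le_def by simp
  moreover have "nrm B (f (g b)) = nrm B b"
    using qmono_nrm[OF f qmono_mem[OF g b]] qmono_nrm[OF g b] by simp
  ultimately show ?thesis unfolding underlying_le_def by simp
qed

lemma qgalois_right_adjoint_eqI:
  assumes G: "qgalois A B f g"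
    and order: "reflp_on (carr A) (underlying_le A)" "transp_on (carr A) (underlying_le A)"
      "antisymp_on (carr A) (underlying_le A)"
    and b: "b \<in> carr B" and k: "k \<in> carr A"
    and adj: "\<And>a. a \<in> carr A \<Longrightarrow> underlying_le A a k \<longleftrightarrow> underlying_le B (f a) b"
  shows "g b = k"
proof -
  note f = qgalois_qmono(1)[OF G] and g = qgalois_qmono(2)[OF G]
  have gb: "g b \<in> carr A" using qmono_mem[OF g b] .
  have "underlying_le A (g b) k"
    using adj[OF gb] qgalois_counit[OF G b] by simp
  moreover have "underlying_le A k (g b)"
  proof -
    have "underlying_le B (f k) b" using adj[OF k] reflp_onD[OF order(1) k] by simp
    then have "underlying_le A (g (f k)) (g b)"
      by (rule qmono_underlying_le[OF g qmono_mem[OF f k] b])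
    then show ?thesis
      using transp_onD[OF order(2) k _ gb] qgalois_unit[OF G k] qmono_mem[OF g qmono_mem[OF f k]]
      by blast
  qed
  ultimately show ?thesis using antisymp_onD[OF order(3) gb k] by blast
qed

lemma qgalois_left_adjoint_eqI:
  assumes G: "qgalois A B f g"
    and order: "reflp_on (carr B) (underlying_le B)" "transp_on (carr B) (underlying_le B)"
      "antisymp_on (carr B) (underlying_le B)"
    and a: "a \<in> carr A" and k: "k \<in> carr B"
    and adj: "\<And>b. b \<in> carr B \<Longrightarrow> underlying_le B k b \<longleftrightarrow> underlying_le A a (g b)"
  shows "f a = k"
proof -
  note f = qgalois_qmono(1)[OF G] and g = qgalois_qmono(2)[OF G]
  have fa: "f a \<in> carr B" using qmono_mem[OF f a] .
  have "underlying_le B k (f a)"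
    using adj[OF fa] qgalois_unit[OF G a] by simp
  moreover have "underlying_le B (f a) k"
  proof -
    have "underlying_le A a (g k)" using adj[OF k] reflp_onD[OF order(1) k] by simp
    then have "underlying_le B (f a) (f (g k))"
      by (rule qmono_underlying_le[OF f a qmono_mem[OF g k]])
    then show ?thesis
      using transp_onD[OF order(2) fa _ k] qgalois_counit[OF G k] qmono_mem[OF f qmono_mem[OF g k]]
      by blast
  qed
  ultimately show ?thesis using antisymp_onD[OF order(3) fa k] by blast
qed

lemma is_qrel_prel: "is_qpre X \<Longrightarrow> is_qrel X X (prel X)"
  unfolding is_qpre_def by blast

lemma qpre_refl: "is_qpre X \<Longrightarrow> x \<in> carr X \<Longrightarrow> nrm X x \<le> prel X x x"
  unfolding is_qpre_def qrel_le_def qid_def by force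

lemma qpre_trans: "is_qpre X \<Longrightarrow> qrel_le X X (qcomp X X X (prel X) (prel X)) (prel X)"
  unfolding is_qpre_def by blast

definition yoneda :: "('a, 'q::unital_quantale, 'x) qpre_scheme \<Rightarrow> 'a \<Rightarrow> 'q \<times> ('a \<Rightarrow> unit \<Rightarrow> 'q)" where
  "yoneda X x = (nrm X x, \<lambda>x' _. prel X x' x)"

definition coyoneda :: "('a, 'q::unital_quantale, 'x) qpre_scheme \<Rightarrow> 'a \<Rightarrow> 'q \<times> (unit \<Rightarrow> 'a \<Rightarrow> 'q)" where
  "coyoneda X x = (nrm X x, \<lambda>_ x'. prel X x x')"

lemma yoneda_mem_PX:
  assumes X: "is_qpre X" and x: "x \<in> carr X"
  shows "yoneda X x \<in> carr (PX X)"
  using x qrel_DQ[OF is_qrel_prel[OF X]] qrel_out[OF is_qrel_prel[OF X]] qpre_trans[OF X]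
  unfolding mem_PX_iff yoneda_def is_qrel_def qrel_le_def by (auto simp: qcomp_in)

lemma coyoneda_mem_PdX:
  assumes X: "is_qpre X" and x: "x \<in> carr X"
  shows "coyoneda X x \<in> carr (PdX X)"
  using x qrel_DQ[OF is_qrel_prel[OF X]] qrel_out[OF is_qrel_prel[OF X]] qpre_trans[OF X]
  unfolding mem_PdX_iff coyoneda_def is_qrel_def qrel_le_def by (auto simp: qcomp_in)

lemma le_prel_PX_yoneda:
  assumes X: "is_qpre X" and a: "a \<in> carr (PX X)" and x: "x \<in> carr X"
  shows "snd a x () \<le> prel (PX X) (yoneda X x) a"
  using le_prel_PX_iff[OF yoneda_mem_PX[OF X x] a] PX_DQ[OF a x] PX_presheaf[OF a x]
  by (simp add: yoneda_def)

lemma le_prel_PdX_coyoneda: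
  assumes X: "is_qpre X" and a: "a \<in> carr (PdX X)" and x: "x \<in> carr X"
  shows "snd a () x \<le> prel (PdX X) a (coyoneda X x)"
  using le_prel_PdX_iff[OF a coyoneda_mem_PdX[OF X x]] PdX_DQ[OF a x] PdX_copresheaf[OF a x]
  by (simp add: coyoneda_def)

text \<open>A presheaf is the weighted join of representables, so it suffices to test a left adjoint
  on representables; the test is transported along the right adjoint and the unit at
  \<^term>\<open>yoneda X x\<close>.\<close>

lemma qgalois_PX_left_le:
  assumes X: "is_qpre X" and G: "qgalois (PX X) B f g" and trans: "transp_on (carr B) (underlying_le B)"
    and a: "a \<in> carr (PX X)" and k: "k \<in> carr B" and nk: "nrm B k = fst a"
    and le: "\<And>x. x \<in> carr X \<Longrightarrow> snd a x () \<le> prel B (f (yoneda X x)) k"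
  shows "underlying_le B (f a) k"
proof -
  note f = qgalois_qmono(1)[OF G] and g = qgalois_qmono(2)[OF G]
  have gk: "g k \<in> carr (PX X)" "fst (g k) = fst a"
    using qmono_mem[OF g k] qmono_nrm[OF g k] nk by auto
  have "snd a x () \<le> snd (g k) x ()" if x: "x \<in> carr X" for x
  proof -
    let ?c = "f (yoneda X x)" and ?t = "snd a x ()"
    have c: "?c \<in> carr B" using qmono_mem[OF f yoneda_mem_PX[OF X x]] .
    have gc: "g ?c \<in> carr (PX X)" "fst (g ?c) = nrm X x"
      using qmono_mem[OF g c] qmono_nrm[OF g c] qmono_nrm[OF f yoneda_mem_PX[OF X x]]
      by (auto simp: yoneda_def)
    have "?t \<le> prel (PX X) (g ?c) (g k)"
      using le[OF x] qmono_prel[OF g c k] by (rule order_trans)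
    then have "rres ?t (nrm X x) * snd (g ?c) x () \<le> snd (g k) x ()"
      using le_prel_PX_iff[OF gc(1) gk(1)] PX_DQ[OF a x] gc(2) gk(2) x by simp
    moreover have "nrm X x \<le> snd (g ?c) x ()"
      using qgalois_unit[OF G yoneda_mem_PX[OF X x]] underlying_le_PX_iff[OF yoneda_mem_PX[OF X x] gc(1)]
        qpre_refl[OF X x] x by (auto simp: yoneda_def intro: order_trans)
    then have "?t \<le> rres ?t (nrm X x) * snd (g ?c) x ()"
      using quantale_mult_right_mono DQ_rres[OF PX_DQ[OF a x]] by metis
    ultimately show ?thesis by (rule order_trans[rotated])
  qed
  then have "underlying_le (PX X) a (g k)"
    using underlying_le_PX_iff[OF a gk(1)] gk(2) by simp
  then have "underlying_le B (f a) (f (g k))"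
    by (rule qmono_underlying_le[OF f a gk(1)])
  then show ?thesis
    using transp_onD[OF trans] qgalois_counit[OF G k] qmono_mem[OF f a] qmono_mem[OF f gk(1)] k
    by blast
qed

lemma qgalois_PdX_right_ge:
  assumes Y: "is_qpre Y" and G: "qgalois A (PdX Y) f g" and trans: "transp_on (carr A) (underlying_le A)"
    and b: "b \<in> carr (PdX Y)" and k: "k \<in> carr A" and nk: "nrm A k = fst b"
    and le: "\<And>y. y \<in> carr Y \<Longrightarrow> snd b () y \<le> prel A k (g (coyoneda Y y))"
  shows "underlying_le A k (g b)"
proof -
  note f = qgalois_qmono(1)[OF G] and g = qgalois_qmono(2)[OF G]
  have fk: "f k \<in> carr (PdX Y)" "fst (f k) = fst b"
    using qmono_mem[OF f k] qmono_nrm[OF f k] nk by auto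
  have "snd b () y \<le> snd (f k) () y" if y: "y \<in> carr Y" for y
  proof -
    let ?c = "g (coyoneda Y y)" and ?t = "snd b () y"
    have c: "?c \<in> carr A" using qmono_mem[OF g coyoneda_mem_PdX[OF Y y]] .
    have fc: "f ?c \<in> carr (PdX Y)" "fst (f ?c) = nrm Y y"
      using qmono_mem[OF f c] qmono_nrm[OF f c] qmono_nrm[OF g coyoneda_mem_PdX[OF Y y]]
      by (auto simp: coyoneda_def)
    have "?t \<le> prel (PdX Y) (f k) (f ?c)"
      using le[OF y] qmono_prel[OF f k c] by (rule order_trans)
    then have "rres (snd (f ?c) () y) (nrm Y y) * ?t \<le> snd (f k) () y"
      using le_prel_PdX_iff[OF fk(1) fc(1)] PdX_DQ[OF b y] fc(2) fk(2) y by simp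
    moreover have "nrm Y y \<le> snd (f ?c) () y"
      using qgalois_counit[OF G coyoneda_mem_PdX[OF Y y]] underlying_le_PdX_iff[OF fc(1) coyoneda_mem_PdX[OF Y y]]
        qpre_refl[OF Y y] y by (auto simp: coyoneda_def intro: order_trans)
    then have "?t \<le> rres (snd (f ?c) () y) (nrm Y y) * ?t"
      using quantale_mult_left_mono[OF rres_mono] DQ_unit_left[OF PdX_DQ[OF b y]] by metis
    ultimately show ?thesis by (rule order_trans[rotated])
  qed
  then have "underlying_le (PdX Y) (f k) b"
    using underlying_le_PdX_iff[OF fk(1) b] fk(2) by simp
  then have "underlying_le A (g (f k)) (g b)"
    by (rule qmono_underlying_le[OF g fk(1) b])
  then show ?thesis
    using transp_onD[OF trans] qgalois_unit[OF G k] qmono_mem[OF g fk(1)] qmono_mem[OF g b] k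
    by blast
qed

section \<open>Polarities, axialities and dual axialities\<close>

lemma is_qdistI:
  assumes "is_qrel X Y \<phi>" and "qrel_le X Y (qcomp X Y Y (prel Y) \<phi>) \<phi>"
    and "qrel_le X Y (qcomp X X Y \<phi> (prel X)) \<phi>"
  shows "is_qdist X Y \<phi>"
  using assms qrel_le_trans[OF qcomp_mono_right] unfolding is_qdist_def by blast

lemma d_up_mem_PdX:
  assumes B: "is_qpre B" and \<phi>B: "qrel_le A B (qcomp A B B (prel B) \<phi>) \<phi>" and a: "a \<in> carr (PX A)"
  shows "d_up A B \<phi> a \<in> carr (PdX B)"
proof -
  obtain q \<mu> where a_eq: "a = (q, \<mu>)" by (cases a)
  let ?L = "qlift A (qone q) B \<phi> \<mu>"
  have \<mu>: "is_qrel A (qone q) \<mu>" using a by (simp add: a_eq mem_PX_iff)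
  have L: "is_qrel (qone q) B ?L" by (rule is_qrel_qlift[OF \<mu>])
  have "qrel_le A B (qcomp A B B (prel B) (qcomp A (qone q) B ?L \<mu>)) \<phi>"
    using qrel_le_trans[OF qcomp_mono_right[OF qcomp_qlift_le[OF \<mu>]] \<phi>B] .
  then have "qrel_le (qone q) B (qcomp (qone q) B B (prel B) ?L) ?L"
    using qrel_le_qlift_iff[OF \<mu> is_qrel_qcomp[OF L is_qrel_prel[OF B]]]
      qcomp_assoc[OF \<mu> L is_qrel_prel[OF B]] by simp
  then show ?thesis using L by (simp add: a_eq d_up_def mem_PdX_iff)
qed

lemma d_down_mem_PX:
  assumes A: "is_qpre A" and \<phi>A: "qrel_le A B (qcomp A A B \<phi> (prel A)) \<phi>" and b: "b \<in> carr (PdX B)"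
  shows "d_down A B \<phi> b \<in> carr (PX A)"
proof -
  obtain q l where b_eq: "b = (q, l)" by (cases b)
  let ?R = "qext A (qone q) B l \<phi>"
  have l: "is_qrel (qone q) B l" using b by (simp add: b_eq mem_PdX_iff)
  have R: "is_qrel A (qone q) ?R" by (rule is_qrel_qext[OF l])
  have "qrel_le A B (qcomp A A B (qcomp A (qone q) B l ?R) (prel A)) \<phi>"
    using qrel_le_trans[OF qcomp_mono_left[OF qcomp_qext_le[OF l]] \<phi>A] .
  then have "qrel_le A (qone q) (qcomp A A (qone q) ?R (prel A)) ?R"
    using qrel_le_qext_iff[OF l is_qrel_qcomp[OF is_qrel_prel[OF A] R]]
      qcomp_assoc[OF is_qrel_prel[OF A] R l] by simp
  then show ?thesis using R by (simp add: b_eq d_down_def mem_PX_iff)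
qed

lemma d_up_d_down_adjunction:
  assumes \<phi>: "is_qrel X Y \<phi>" and a: "a \<in> carr (PX X)" and b: "b \<in> carr (PdX Y)"
    and up: "d_up X Y \<phi> a \<in> carr (PdX Y)" and down: "d_down X Y \<phi> b \<in> carr (PX X)"
  shows "underlying_le (PX X) a (d_down X Y \<phi> b) \<longleftrightarrow> underlying_le (PdX Y) (d_up X Y \<phi> a) b"
proof -
  obtain q \<mu> where a_eq: "a = (q, \<mu>)" by (cases a)
  obtain q' l where b_eq: "b = (q', l)" by (cases b)
  have \<mu>: "is_qrel X (qone q) \<mu>" using a by (simp add: a_eq mem_PX_iff)
  have l: "is_qrel (qone q') Y l" using b by (simp add: b_eq mem_PdX_iff)
  have "underlying_le (PX X) a (d_down X Y \<phi> b) \<longleftrightarrow>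
      q = q' \<and> qrel_le X (qone q) \<mu> (qext X (qone q') Y l \<phi>)"
    using underlying_le_PX_iff[OF a down] by (simp add: a_eq b_eq d_down_def qrel_le_into_qone_iff)
  also have "\<dots> \<longleftrightarrow> q = q' \<and> qrel_le X Y (qcomp X (qone q) Y l \<mu>) \<phi>"
    using qrel_le_qext_iff[OF l] \<mu> by auto
  also have "\<dots> \<longleftrightarrow> q = q' \<and> qrel_le (qone q) Y l (qlift X (qone q) Y \<phi> \<mu>)"
    using qrel_le_qlift_iff[OF \<mu>] l by auto
  also have "\<dots> \<longleftrightarrow> underlying_le (PdX Y) (d_up X Y \<phi> a) b"
    using underlying_le_PdX_iff[OF up b] by (auto simp: a_eq b_eq d_up_def qrel_le_from_qone_iff)
  finally show ?thesis .
qed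

lemma qmono_PX_PdX_yoneda:
  assumes X: "is_qpre X" and f: "is_qmono (PX X) (PdX Y) f"
    and a: "a \<in> carr (PX X)" and x: "x \<in> carr X" and y: "y \<in> carr Y"
  shows "rres (snd (f a) () y) (fst a) * snd a x () \<le> snd (f (yoneda X x)) () y"
proof -
  have yo: "yoneda X x \<in> carr (PX X)" by (rule yoneda_mem_PX[OF X x])
  have "snd a x () \<le> prel (PdX Y) (f (yoneda X x)) (f a)"
    using le_prel_PX_yoneda[OF X a x] qmono_prel[OF f yo a] by (rule order_trans)
  then show ?thesis
    using le_prel_PdX_iff[OF qmono_mem[OF f yo] qmono_mem[OF f a]] PX_DQ[OF a x] y
      qmono_nrm[OF f yo] qmono_nrm[OF f a] by (simp add: yoneda_def)
qed

definition dist_of_polarity :: "('a, 'q::unital_quantale, 'x) qpre_scheme \<Rightarrow> ('b, 'q, 'y) qpre_scheme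
    \<Rightarrow> ('q \<times> ('a \<Rightarrow> unit \<Rightarrow> 'q) \<Rightarrow> 'q \<times> (unit \<Rightarrow> 'b \<Rightarrow> 'q)) \<Rightarrow> 'a \<Rightarrow> 'b \<Rightarrow> 'q" where
  "dist_of_polarity X Y f x y = (if x \<in> carr X \<and> y \<in> carr Y then snd (f (yoneda X x)) () y else bot)"

lemma dist_of_polarity_at:
  assumes X: "is_qpre X" and f: "is_qmono (PX X) (PdX Y) f" and x: "x \<in> carr X"
  shows "f (yoneda X x) \<in> carr (PdX Y)" and "fst (f (yoneda X x)) = nrm X x"
    and "\<And>y. y \<in> carr Y \<Longrightarrow> dist_of_polarity X Y f x y = snd (f (yoneda X x)) () y"
  using qmono_mem[OF f yoneda_mem_PX[OF X x]] qmono_nrm[OF f yoneda_mem_PX[OF X x]] x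
  by (auto simp: yoneda_def dist_of_polarity_def)

lemma is_qrel_dist_of_polarity:
  assumes X: "is_qpre X" and f: "is_qmono (PX X) (PdX Y) f"
  shows "is_qrel X Y (dist_of_polarity X Y f)"
  unfolding is_qrel_def
  using PdX_DQ[OF dist_of_polarity_at(1)[OF X f]] dist_of_polarity_at(2,3)[OF X f]
  by (auto simp: dist_of_polarity_def)

lemma prel_comp_dist_of_polarity_le:
  assumes X: "is_qpre X" and f: "is_qmono (PX X) (PdX Y) f"
  shows "qrel_le X Y (qcomp X Y Y (prel Y) (dist_of_polarity X Y f)) (dist_of_polarity X Y f)"
  using PdX_copresheaf[OF dist_of_polarity_at(1)[OF X f]] dist_of_polarity_at(3)[OF X f]
  by (auto simp: qrel_le_def qcomp_in intro!: SUP_least)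

lemma dist_of_polarity_comp_prel_le:
  assumes X: "is_qpre X" and f: "is_qmono (PX X) (PdX Y) f"
  shows "qrel_le X Y (qcomp X X Y (dist_of_polarity X Y f) (prel X)) (dist_of_polarity X Y f)"
  using qmono_PX_PdX_yoneda[OF X f yoneda_mem_PX[OF X]] dist_of_polarity_at[OF X f]
  by (auto simp: qrel_le_def qcomp_in yoneda_def intro!: SUP_least)

lemma polarity_left_eq_d_up:
  assumes X: "is_qpre X" and Y: "is_qpre Y" and G: "qgalois (PX X) (PdX Y) f g"
    and a: "a \<in> carr (PX X)"
  shows "f a = d_up X Y (dist_of_polarity X Y f) a"
proof -
  note f = qgalois_qmono(1)[OF G]
  let ?\<phi> = "dist_of_polarity X Y f"
  obtain q \<mu> where a_eq: "a = (q, \<mu>)" by (cases a)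
  let ?L = "qlift X (qone q) Y ?\<phi> \<mu>"
  have \<mu>: "is_qrel X (qone q) \<mu>" using a by (simp add: a_eq mem_PX_iff)
  have up: "d_up X Y ?\<phi> a \<in> carr (PdX Y)"
    by (rule d_up_mem_PdX[OF Y prel_comp_dist_of_polarity_le[OF X f] a])
  have fa: "f a \<in> carr (PdX Y)" "fst (f a) = q"
    using qmono_mem[OF f a] qmono_nrm[OF f a] by (auto simp: a_eq)
  have "underlying_le (PdX Y) (f a) (d_up X Y ?\<phi> a)"
  proof (rule qgalois_PX_left_le[OF X G underlying_le_PdX_order(2) a up])
    show "nrm (PdX Y) (d_up X Y ?\<phi> a) = fst a" by (simp add: a_eq d_up_def)
    fix x assume x: "x \<in> carr X"
    note fyo = dist_of_polarity_at[OF X f x]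
    have "rres (?L () y) q * \<mu> x () \<le> snd (f (yoneda X x)) () y" if y: "y \<in> carr Y" for y
      using qrel_leD[OF qcomp_qlift_le[OF \<mu>, where \<xi> = ?\<phi>] x y] x y fyo(3)[OF y]
      by (simp add: qcomp_in)
    then show "snd a x () \<le> prel (PdX Y) (f (yoneda X x)) (d_up X Y ?\<phi> a)"
      using le_prel_PdX_iff[OF fyo(1) up] PX_DQ[OF a x] fyo(2) by (simp add: a_eq d_up_def)
  qed
  moreover have "underlying_le (PdX Y) (d_up X Y ?\<phi> a) (f a)"
  proof -
    have "qrel_le X Y (qcomp X (qone q) Y (snd (f a)) \<mu>) ?\<phi>"
      using qmono_PX_PdX_yoneda[OF X f a] dist_of_polarity_at(3)[OF X f] fa(2)
      by (simp add: qrel_le_def qcomp_in a_eq)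
    moreover have "is_qrel (qone q) Y (snd (f a))"
      using fa by (simp add: mem_PdX_iff)
    ultimately have "qrel_le (qone q) Y (snd (f a)) ?L"
      using qrel_le_qlift_iff[OF \<mu>] by blast
    then show ?thesis
      using underlying_le_PdX_iff[OF up fa(1)] fa(2) by (simp add: a_eq d_up_def qrel_le_from_qone_iff)
  qed
  ultimately show ?thesis
    using antisymp_onD[OF underlying_le_PdX_order(3) fa(1) up] by blast
qed

lemma polarity_eq_d_up_d_down:
  assumes X: "is_qpre X" and Y: "is_qpre Y" and G: "qgalois (PX X) (PdX Y) f g"
  shows "is_qdist X Y (dist_of_polarity X Y f)"
    and "\<And>a. a \<in> carr (PX X) \<Longrightarrow> f a = d_up X Y (dist_of_polarity X Y f) a"
    and "\<And>b. b \<in> carr (PdX Y) \<Longrightarrow> g b = d_down X Y (dist_of_polarity X Y f) b"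
proof -
  note f = qgalois_qmono(1)[OF G]
  let ?\<phi> = "dist_of_polarity X Y f"
  note \<phi> = is_qrel_dist_of_polarity[OF X f] prel_comp_dist_of_polarity_le[OF X f]
    dist_of_polarity_comp_prel_le[OF X f]
  show "is_qdist X Y ?\<phi>" using is_qdistI[OF \<phi>] .
  show f_eq: "f a = d_up X Y ?\<phi> a" if "a \<in> carr (PX X)" for a
    by (rule polarity_left_eq_d_up[OF X Y G that])
  show "g b = d_down X Y ?\<phi> b" if b: "b \<in> carr (PdX Y)" for b
  proof (rule qgalois_right_adjoint_eqI[OF G underlying_le_PX_order b d_down_mem_PX[OF X \<phi>(3) b]])
    fix a assume a: "a \<in> carr (PX X)"
    show "underlying_le (PX X) a (d_down X Y ?\<phi> b) \<longleftrightarrow> underlying_le (PdX Y) (f a) b"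
      using d_up_d_down_adjunction[OF \<phi>(1) a b d_up_mem_PdX[OF Y \<phi>(2) a] d_down_mem_PX[OF X \<phi>(3) b]]
      by (simp add: f_eq[OF a])
  qed
qed

lemma d_star_up_mem_PX:
  assumes A: "is_qpre A" and \<phi>: "is_qrel A B \<phi>" and \<phi>A: "qrel_le A B (qcomp A A B \<phi> (prel A)) \<phi>"
    and a: "a \<in> carr (PX B)"
  shows "d_star_up A B \<phi> a \<in> carr (PX A)"
proof -
  obtain q \<mu> where a_eq: "a = (q, \<mu>)" by (cases a)
  have \<mu>: "is_qrel B (qone q) \<mu>" using a by (simp add: a_eq mem_PX_iff)
  have "qrel_le A (qone q) (qcomp A B (qone q) \<mu> (qcomp A A B \<phi> (prel A))) (qcomp A B (qone q) \<mu> \<phi>)"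
    by (rule qcomp_mono_right[OF \<phi>A])
  then have "qrel_le A (qone q) (qcomp A A (qone q) (qcomp A B (qone q) \<mu> \<phi>) (prel A)) (qcomp A B (qone q) \<mu> \<phi>)"
    using qcomp_assoc[OF is_qrel_prel[OF A] \<phi> \<mu>] by simp
  then show ?thesis using is_qrel_qcomp[OF \<phi> \<mu>] by (simp add: a_eq d_star_up_def mem_PX_iff)
qed

lemma d_star_low_mem_PX:
  assumes B: "is_qpre B" and \<phi>: "is_qrel A B \<phi>" and \<phi>B: "qrel_le A B (qcomp A B B (prel B) \<phi>) \<phi>"
  shows "d_star_low A B \<phi> a \<in> carr (PX B)"
proof -
  obtain q \<mu> where a_eq: "a = (q, \<mu>)" by (cases a)
  let ?L = "qlift A B (qone q) \<mu> \<phi>"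
  have L: "is_qrel B (qone q) ?L" by (rule is_qrel_qlift[OF \<phi>])
  have "qrel_le A (qone q) (qcomp A B (qone q) ?L (qcomp A B B (prel B) \<phi>)) \<mu>"
    using qrel_le_trans[OF qcomp_mono_right[OF \<phi>B] qcomp_qlift_le[OF \<phi>]] .
  then have "qrel_le B (qone q) (qcomp B B (qone q) ?L (prel B)) ?L"
    using qrel_le_qlift_iff[OF \<phi> is_qrel_qcomp[OF is_qrel_prel[OF B] L]]
      qcomp_assoc[OF \<phi> is_qrel_prel[OF B] L] by simp
  then show ?thesis using L by (simp add: a_eq d_star_low_def mem_PX_iff)
qed

lemma d_star_up_d_star_low_adjunction:
  assumes \<phi>: "is_qrel A B \<phi>" and a: "a \<in> carr (PX B)" and b: "b \<in> carr (PX A)"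
    and up: "d_star_up A B \<phi> a \<in> carr (PX A)" and low: "d_star_low A B \<phi> b \<in> carr (PX B)"
  shows "underlying_le (PX A) (d_star_up A B \<phi> a) b \<longleftrightarrow> underlying_le (PX B) a (d_star_low A B \<phi> b)"
proof -
  obtain q \<mu> where a_eq: "a = (q, \<mu>)" by (cases a)
  obtain q' \<nu> where b_eq: "b = (q', \<nu>)" by (cases b)
  have \<mu>: "is_qrel B (qone q) \<mu>" using a by (simp add: a_eq mem_PX_iff)
  have "underlying_le (PX A) (d_star_up A B \<phi> a) b \<longleftrightarrow>
      q = q' \<and> qrel_le A (qone q) (qcomp A B (qone q) \<mu> \<phi>) \<nu>"
    using underlying_le_PX_iff[OF up b] by (auto simp: a_eq b_eq d_star_up_def qrel_le_into_qone_iff)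
  also have "\<dots> \<longleftrightarrow> q = q' \<and> qrel_le B (qone q) \<mu> (qlift A B (qone q) \<nu> \<phi>)"
    using qrel_le_qlift_iff[OF \<phi> \<mu>] by auto
  also have "\<dots> \<longleftrightarrow> underlying_le (PX B) a (d_star_low A B \<phi> b)"
    using underlying_le_PX_iff[OF a low] by (auto simp: a_eq b_eq d_star_low_def qrel_le_into_qone_iff)
  finally show ?thesis .
qed

lemma qmono_PX_PX_yoneda:
  assumes X: "is_qpre X" and f: "is_qmono (PX X) (PX Y) f"
    and a: "a \<in> carr (PX X)" and x: "x \<in> carr X" and y: "y \<in> carr Y"
  shows "rres (snd a x ()) (nrm X x) * snd (f (yoneda X x)) y () \<le> snd (f a) y ()"
proof -
  have yo: "yoneda X x \<in> carr (PX X)" by (rule yoneda_mem_PX[OF X x])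
  have "snd a x () \<le> prel (PX Y) (f (yoneda X x)) (f a)"
    using le_prel_PX_yoneda[OF X a x] qmono_prel[OF f yo a] by (rule order_trans)
  then show ?thesis
    using le_prel_PX_iff[OF qmono_mem[OF f yo] qmono_mem[OF f a]] PX_DQ[OF a x] y
      qmono_nrm[OF f yo] qmono_nrm[OF f a] by (simp add: yoneda_def)
qed

definition dist_of_axiality :: "('a, 'q::unital_quantale, 'x) qpre_scheme \<Rightarrow> ('b, 'q, 'y) qpre_scheme
    \<Rightarrow> ('q \<times> ('a \<Rightarrow> unit \<Rightarrow> 'q) \<Rightarrow> 'q \<times> ('b \<Rightarrow> unit \<Rightarrow> 'q)) \<Rightarrow> 'b \<Rightarrow> 'a \<Rightarrow> 'q" where
  "dist_of_axiality X Y f y x = (if y \<in> carr Y \<and> x \<in> carr X then snd (f (yoneda X x)) y () else bot)"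

lemma dist_of_axiality_at:
  assumes X: "is_qpre X" and f: "is_qmono (PX X) (PX Y) f" and x: "x \<in> carr X"
  shows "f (yoneda X x) \<in> carr (PX Y)" and "fst (f (yoneda X x)) = nrm X x"
    and "\<And>y. y \<in> carr Y \<Longrightarrow> dist_of_axiality X Y f y x = snd (f (yoneda X x)) y ()"
  using qmono_mem[OF f yoneda_mem_PX[OF X x]] qmono_nrm[OF f yoneda_mem_PX[OF X x]] x
  by (auto simp: yoneda_def dist_of_axiality_def)

lemma is_qrel_dist_of_axiality:
  assumes X: "is_qpre X" and f: "is_qmono (PX X) (PX Y) f"
  shows "is_qrel Y X (dist_of_axiality X Y f)"
  unfolding is_qrel_def
  using PX_DQ[OF dist_of_axiality_at(1)[OF X f]] dist_of_axiality_at(2,3)[OF X f]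
  by (auto simp: dist_of_axiality_def)

lemma dist_of_axiality_comp_prel_le:
  assumes X: "is_qpre X" and f: "is_qmono (PX X) (PX Y) f"
  shows "qrel_le Y X (qcomp Y Y X (dist_of_axiality X Y f) (prel Y)) (dist_of_axiality X Y f)"
  using PX_presheaf[OF dist_of_axiality_at(1)[OF X f]] dist_of_axiality_at(3)[OF X f]
  by (auto simp: qrel_le_def qcomp_in intro!: SUP_least)

lemma prel_comp_dist_of_axiality_le:
  assumes X: "is_qpre X" and f: "is_qmono (PX X) (PX Y) f"
  shows "qrel_le Y X (qcomp Y X X (prel X) (dist_of_axiality X Y f)) (dist_of_axiality X Y f)"
  using qmono_PX_PX_yoneda[OF X f yoneda_mem_PX[OF X]] dist_of_axiality_at(3)[OF X f]
  by (auto simp: qrel_le_def qcomp_in yoneda_def intro!: SUP_least)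

lemma axiality_left_eq_d_star_up:
  assumes X: "is_qpre X" and Y: "is_qpre Y" and G: "qgalois (PX X) (PX Y) f g"
    and a: "a \<in> carr (PX X)"
  shows "f a = d_star_up Y X (dist_of_axiality X Y f) a"
proof -
  note f = qgalois_qmono(1)[OF G]
  let ?\<phi> = "dist_of_axiality X Y f"
  obtain q \<mu> where a_eq: "a = (q, \<mu>)" by (cases a)
  let ?C = "qcomp Y X (qone q) \<mu> ?\<phi>"
  have up: "d_star_up Y X ?\<phi> a \<in> carr (PX Y)"
    using d_star_up_mem_PX[OF Y is_qrel_dist_of_axiality[OF X f] dist_of_axiality_comp_prel_le[OF X f] a] .
  have fa: "f a \<in> carr (PX Y)" "fst (f a) = q"
    using qmono_mem[OF f a] qmono_nrm[OF f a] by (auto simp: a_eq)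
  have C: "?C y () = (SUP x\<in>carr X. rres (\<mu> x ()) (nrm X x) * snd (f (yoneda X x)) y ())"
    if y: "y \<in> carr Y" for y
    using y dist_of_axiality_at(3)[OF X f _ y] by (simp add: qcomp_in cong: SUP_cong)
  have "underlying_le (PX Y) (f a) (d_star_up Y X ?\<phi> a)"
  proof (rule qgalois_PX_left_le[OF X G underlying_le_PX_order(2) a up])
    show "nrm (PX Y) (d_star_up Y X ?\<phi> a) = fst a" by (simp add: a_eq d_star_up_def)
    fix x assume x: "x \<in> carr X"
    note fyo = dist_of_axiality_at[OF X f x]
    have "rres (\<mu> x ()) (nrm X x) * snd (f (yoneda X x)) y () \<le> ?C y ()" if y: "y \<in> carr Y" for y
      unfolding C[OF y] using x by (rule SUP_upper2) simp
    then show "snd a x () \<le> prel (PX Y) (f (yoneda X x)) (d_star_up Y X ?\<phi> a)"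
      using le_prel_PX_iff[OF fyo(1) up] PX_DQ[OF a x] fyo(2) by (simp add: a_eq d_star_up_def)
  qed
  moreover have "underlying_le (PX Y) (d_star_up Y X ?\<phi> a) (f a)"
    using underlying_le_PX_iff[OF up fa(1)] fa(2) qmono_PX_PX_yoneda[OF X f a]
    by (auto simp: a_eq d_star_up_def C intro!: SUP_least)
  ultimately show ?thesis
    using antisymp_onD[OF underlying_le_PX_order(3) fa(1) up] by blast
qed

lemma axiality_eq_d_star_up_d_star_low:
  assumes X: "is_qpre X" and Y: "is_qpre Y" and G: "qgalois (PX X) (PX Y) f g"
  shows "is_qdist Y X (dist_of_axiality X Y f)"
    and "\<And>a. a \<in> carr (PX X) \<Longrightarrow> f a = d_star_up Y X (dist_of_axiality X Y f) a"
    and "\<And>b. b \<in> carr (PX Y) \<Longrightarrow> g b = d_star_low Y X (dist_of_axiality X Y f) b"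
proof -
  note f = qgalois_qmono(1)[OF G]
  let ?\<phi> = "dist_of_axiality X Y f"
  note \<phi> = is_qrel_dist_of_axiality[OF X f] prel_comp_dist_of_axiality_le[OF X f]
    dist_of_axiality_comp_prel_le[OF X f]
  show "is_qdist Y X ?\<phi>" using is_qdistI[OF \<phi>] .
  show f_eq: "f a = d_star_up Y X ?\<phi> a" if "a \<in> carr (PX X)" for a
    by (rule axiality_left_eq_d_star_up[OF X Y G that])
  show "g b = d_star_low Y X ?\<phi> b" if b: "b \<in> carr (PX Y)" for b
  proof (rule qgalois_right_adjoint_eqI[OF G underlying_le_PX_order b d_star_low_mem_PX[OF X \<phi>(1,2)]])
    fix a assume a: "a \<in> carr (PX X)"
    show "underlying_le (PX X) a (d_star_low Y X ?\<phi> b) \<longleftrightarrow> underlying_le (PX Y) (f a) b"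
      using d_star_up_d_star_low_adjunction[OF \<phi>(1) a b d_star_up_mem_PX[OF Y \<phi>(1,3) a]
          d_star_low_mem_PX[OF X \<phi>(1,2)]]
      by (simp add: f_eq[OF a])
  qed
qed

lemma d_dag_up_mem_PdX:
  assumes B: "is_qpre B" and \<phi>: "is_qrel A B \<phi>" and \<phi>B: "qrel_le A B (qcomp A B B (prel B) \<phi>) \<phi>"
    and a: "a \<in> carr (PdX A)"
  shows "d_dag_up A B \<phi> a \<in> carr (PdX B)"
proof -
  obtain q l where a_eq: "a = (q, l)" by (cases a)
  have l: "is_qrel (qone q) A l" using a by (simp add: a_eq mem_PdX_iff)
  have "qrel_le (qone q) B (qcomp (qone q) A B (qcomp A B B (prel B) \<phi>) l) (qcomp (qone q) A B \<phi> l)"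
    by (rule qcomp_mono_left[OF \<phi>B])
  then have "qrel_le (qone q) B (qcomp (qone q) B B (prel B) (qcomp (qone q) A B \<phi> l)) (qcomp (qone q) A B \<phi> l)"
    using qcomp_assoc[OF l \<phi> is_qrel_prel[OF B]] by simp
  then show ?thesis using is_qrel_qcomp[OF l \<phi>] by (simp add: a_eq d_dag_up_def mem_PdX_iff)
qed

lemma d_dag_low_mem_PdX:
  assumes A: "is_qpre A" and \<phi>: "is_qrel A B \<phi>" and \<phi>A: "qrel_le A B (qcomp A A B \<phi> (prel A)) \<phi>"
  shows "d_dag_low A B \<phi> b \<in> carr (PdX A)"
proof -
  obtain q l where b_eq: "b = (q, l)" by (cases b)
  let ?R = "qext (qone q) A B \<phi> l"
  have R: "is_qrel (qone q) A ?R" by (rule is_qrel_qext[OF \<phi>])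
  have "qrel_le (qone q) B (qcomp (qone q) A B (qcomp A A B \<phi> (prel A)) ?R) l"
    using qrel_le_trans[OF qcomp_mono_left[OF \<phi>A] qcomp_qext_le[OF \<phi>]] .
  then have "qrel_le (qone q) A (qcomp (qone q) A A (prel A) ?R) ?R"
    using qrel_le_qext_iff[OF \<phi> is_qrel_qcomp[OF R is_qrel_prel[OF A]]]
      qcomp_assoc[OF R is_qrel_prel[OF A] \<phi>] by simp
  then show ?thesis using R by (simp add: b_eq d_dag_low_def mem_PdX_iff)
qed

lemma d_dag_low_d_dag_up_adjunction:
  assumes \<phi>: "is_qrel A B \<phi>" and a: "a \<in> carr (PdX B)" and b: "b \<in> carr (PdX A)"
    and low: "d_dag_low A B \<phi> a \<in> carr (PdX A)" and up: "d_dag_up A B \<phi> b \<in> carr (PdX B)"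
  shows "underlying_le (PdX A) (d_dag_low A B \<phi> a) b \<longleftrightarrow> underlying_le (PdX B) a (d_dag_up A B \<phi> b)"
proof -
  obtain q l where a_eq: "a = (q, l)" by (cases a)
  obtain q' m where b_eq: "b = (q', m)" by (cases b)
  have m: "is_qrel (qone q') A m" using b by (simp add: b_eq mem_PdX_iff)
  have "underlying_le (PdX A) (d_dag_low A B \<phi> a) b \<longleftrightarrow>
      q = q' \<and> qrel_le (qone q) A m (qext (qone q) A B \<phi> l)"
    using underlying_le_PdX_iff[OF low b] by (auto simp: a_eq b_eq d_dag_low_def qrel_le_from_qone_iff)
  also have "\<dots> \<longleftrightarrow> q = q' \<and> qrel_le (qone q) B (qcomp (qone q) A B \<phi> m) l"
    using qrel_le_qext_iff[OF \<phi>] m by auto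
  also have "\<dots> \<longleftrightarrow> underlying_le (PdX B) a (d_dag_up A B \<phi> b)"
    using underlying_le_PdX_iff[OF a up] by (auto simp: a_eq b_eq d_dag_up_def qrel_le_from_qone_iff)
  finally show ?thesis .
qed

lemma qmono_PdX_PdX_coyoneda:
  assumes Y: "is_qpre Y" and g: "is_qmono (PdX Y) (PdX X) g"
    and b: "b \<in> carr (PdX Y)" and y: "y \<in> carr Y" and x: "x \<in> carr X"
  shows "rres (snd (g (coyoneda Y y)) () x) (nrm Y y) * snd b () y \<le> snd (g b) () x"
proof -
  have co: "coyoneda Y y \<in> carr (PdX Y)" by (rule coyoneda_mem_PdX[OF Y y])
  have "snd b () y \<le> prel (PdX X) (g b) (g (coyoneda Y y))"
    using le_prel_PdX_coyoneda[OF Y b y] qmono_prel[OF g b co] by (rule order_trans)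
  then show ?thesis
    using le_prel_PdX_iff[OF qmono_mem[OF g b] qmono_mem[OF g co]] PdX_DQ[OF b y] x
      qmono_nrm[OF g co] qmono_nrm[OF g b] by (simp add: coyoneda_def)
qed

definition dist_of_dual_axiality :: "('a, 'q::unital_quantale, 'x) qpre_scheme \<Rightarrow> ('b, 'q, 'y) qpre_scheme
    \<Rightarrow> ('q \<times> (unit \<Rightarrow> 'b \<Rightarrow> 'q) \<Rightarrow> 'q \<times> (unit \<Rightarrow> 'a \<Rightarrow> 'q)) \<Rightarrow> 'b \<Rightarrow> 'a \<Rightarrow> 'q" where
  "dist_of_dual_axiality X Y g y x =
     (if y \<in> carr Y \<and> x \<in> carr X then snd (g (coyoneda Y y)) () x else bot)"

lemma dist_of_dual_axiality_at:
  assumes Y: "is_qpre Y" and g: "is_qmono (PdX Y) (PdX X) g" and y: "y \<in> carr Y"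
  shows "g (coyoneda Y y) \<in> carr (PdX X)" and "fst (g (coyoneda Y y)) = nrm Y y"
    and "\<And>x. x \<in> carr X \<Longrightarrow> dist_of_dual_axiality X Y g y x = snd (g (coyoneda Y y)) () x"
  using qmono_mem[OF g coyoneda_mem_PdX[OF Y y]] qmono_nrm[OF g coyoneda_mem_PdX[OF Y y]] y
  by (auto simp: coyoneda_def dist_of_dual_axiality_def)

lemma is_qrel_dist_of_dual_axiality:
  assumes Y: "is_qpre Y" and g: "is_qmono (PdX Y) (PdX X) g"
  shows "is_qrel Y X (dist_of_dual_axiality X Y g)"
  unfolding is_qrel_def
  using PdX_DQ[OF dist_of_dual_axiality_at(1)[OF Y g]] dist_of_dual_axiality_at(2,3)[OF Y g]
  by (auto simp: dist_of_dual_axiality_def)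

lemma prel_comp_dist_of_dual_axiality_le:
  assumes Y: "is_qpre Y" and g: "is_qmono (PdX Y) (PdX X) g"
  shows "qrel_le Y X (qcomp Y X X (prel X) (dist_of_dual_axiality X Y g)) (dist_of_dual_axiality X Y g)"
  using PdX_copresheaf[OF dist_of_dual_axiality_at(1)[OF Y g]] dist_of_dual_axiality_at(3)[OF Y g]
  by (auto simp: qrel_le_def qcomp_in intro!: SUP_least)

lemma dist_of_dual_axiality_comp_prel_le:
  assumes Y: "is_qpre Y" and g: "is_qmono (PdX Y) (PdX X) g"
  shows "qrel_le Y X (qcomp Y Y X (dist_of_dual_axiality X Y g) (prel Y)) (dist_of_dual_axiality X Y g)"
  using qmono_PdX_PdX_coyoneda[OF Y g coyoneda_mem_PdX[OF Y]] dist_of_dual_axiality_at(3)[OF Y g]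
  by (auto simp: qrel_le_def qcomp_in coyoneda_def intro!: SUP_least)

lemma dual_axiality_right_eq_d_dag_up:
  assumes X: "is_qpre X" and Y: "is_qpre Y" and G: "qgalois (PdX X) (PdX Y) f g"
    and b: "b \<in> carr (PdX Y)"
  shows "g b = d_dag_up Y X (dist_of_dual_axiality X Y g) b"
proof -
  note g = qgalois_qmono(2)[OF G]
  let ?\<phi> = "dist_of_dual_axiality X Y g"
  obtain q m where b_eq: "b = (q, m)" by (cases b)
  let ?C = "qcomp (qone q) Y X ?\<phi> m"
  have up: "d_dag_up Y X ?\<phi> b \<in> carr (PdX X)"
    using d_dag_up_mem_PdX[OF X is_qrel_dist_of_dual_axiality[OF Y g]
        prel_comp_dist_of_dual_axiality_le[OF Y g] b] .
  have gb: "g b \<in> carr (PdX X)" "fst (g b) = q"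
    using qmono_mem[OF g b] qmono_nrm[OF g b] by (auto simp: b_eq)
  have C: "?C () x = (SUP y\<in>carr Y. rres (snd (g (coyoneda Y y)) () x) (nrm Y y) * m () y)"
    if x: "x \<in> carr X" for x
    using x dist_of_dual_axiality_at(3)[OF Y g _ x] by (simp add: qcomp_in cong: SUP_cong)
  have "underlying_le (PdX X) (d_dag_up Y X ?\<phi> b) (g b)"
  proof (rule qgalois_PdX_right_ge[OF Y G underlying_le_PdX_order(2) b up])
    show "nrm (PdX X) (d_dag_up Y X ?\<phi> b) = fst b" by (simp add: b_eq d_dag_up_def)
    fix y assume y: "y \<in> carr Y"
    note gco = dist_of_dual_axiality_at[OF Y g y]
    have "rres (snd (g (coyoneda Y y)) () x) (nrm Y y) * m () y \<le> ?C () x" if x: "x \<in> carr X" for x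
      unfolding C[OF x] using y by (rule SUP_upper2) simp
    then show "snd b () y \<le> prel (PdX X) (d_dag_up Y X ?\<phi> b) (g (coyoneda Y y))"
      using le_prel_PdX_iff[OF up gco(1)] PdX_DQ[OF b y] gco(2) by (simp add: b_eq d_dag_up_def)
  qed
  moreover have "underlying_le (PdX X) (g b) (d_dag_up Y X ?\<phi> b)"
    using underlying_le_PdX_iff[OF gb(1) up] gb(2) qmono_PdX_PdX_coyoneda[OF Y g b]
    by (auto simp: b_eq d_dag_up_def C intro!: SUP_least)
  ultimately show ?thesis
    using antisymp_onD[OF underlying_le_PdX_order(3) gb(1) up] by blast
qed

lemma dual_axiality_eq_d_dag_low_d_dag_up:
  assumes X: "is_qpre X" and Y: "is_qpre Y" and G: "qgalois (PdX X) (PdX Y) f g"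
  shows "is_qdist Y X (dist_of_dual_axiality X Y g)"
    and "\<And>a. a \<in> carr (PdX X) \<Longrightarrow> f a = d_dag_low Y X (dist_of_dual_axiality X Y g) a"
    and "\<And>b. b \<in> carr (PdX Y) \<Longrightarrow> g b = d_dag_up Y X (dist_of_dual_axiality X Y g) b"
proof -
  note g = qgalois_qmono(2)[OF G]
  let ?\<phi> = "dist_of_dual_axiality X Y g"
  note \<phi> = is_qrel_dist_of_dual_axiality[OF Y g] prel_comp_dist_of_dual_axiality_le[OF Y g]
    dist_of_dual_axiality_comp_prel_le[OF Y g]
  show "is_qdist Y X ?\<phi>" using is_qdistI[OF \<phi>] .
  show g_eq: "g b = d_dag_up Y X ?\<phi> b" if "b \<in> carr (PdX Y)" for b
    by (rule dual_axiality_right_eq_d_dag_up[OF X Y G that])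
  show "f a = d_dag_low Y X ?\<phi> a" if a: "a \<in> carr (PdX X)" for a
  proof (rule qgalois_left_adjoint_eqI[OF G underlying_le_PdX_order a d_dag_low_mem_PdX[OF Y \<phi>(1,3)]])
    fix b assume b: "b \<in> carr (PdX Y)"
    show "underlying_le (PdX Y) (d_dag_low Y X ?\<phi> a) b \<longleftrightarrow> underlying_le (PdX X) a (g b)"
      using d_dag_low_d_dag_up_adjunction[OF \<phi>(1) a b d_dag_low_mem_PdX[OF Y \<phi>(1,3)]
          d_dag_up_mem_PdX[OF X \<phi>(1,2) b]]
      by (simp add: g_eq[OF b])
  qed
qed

theorem proposition4p23:
  fixes X :: "('a, 'q::unital_quantale) qpre" and Y :: "('b, 'q) qpre"
  assumes "(bot::'q) < 1"
    and "is_qpre X" and "is_qpre Y"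
  shows
    "(\<forall>f g. qgalois (PX X) (PdX Y) f g \<longrightarrow>
        (\<exists>\<phi>. is_qdist X Y \<phi> \<and> (\<forall>\<mu>\<in>carr (PX X). f \<mu> = d_up X Y \<phi> \<mu>) \<and>
              (\<forall>l\<in>carr (PdX Y). g l = d_down X Y \<phi> l)))
   \<and> (\<forall>f g. qgalois (PX X) (PX Y) f g \<longrightarrow>
        (\<exists>\<phi>. is_qdist Y X \<phi> \<and> (\<forall>\<mu>\<in>carr (PX X). f \<mu> = d_star_up Y X \<phi> \<mu>) \<and>
              (\<forall>\<mu>\<in>carr (PX Y). g \<mu> = d_star_low Y X \<phi> \<mu>)))
   \<and> (\<forall>f g. qgalois (PdX X) (PdX Y) f g \<longrightarrow>
        (\<exists>\<phi>. is_qdist Y X \<phi> \<and> (\<forall>l\<in>carr (PdX X). f l = d_dag_low Y X \<phi> l) \<and>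
              (\<forall>l\<in>carr (PdX Y). g l = d_dag_up Y X \<phi> l)))"
proof (intro conjI allI impI)
  fix f g
  assume "qgalois (PX X) (PdX Y) f g"
  from polarity_eq_d_up_d_down[OF assms(2,3) this]
  show "\<exists>\<phi>. is_qdist X Y \<phi> \<and> (\<forall>\<mu>\<in>carr (PX X). f \<mu> = d_up X Y \<phi> \<mu>) \<and>
      (\<forall>l\<in>carr (PdX Y). g l = d_down X Y \<phi> l)" by blast
next
  fix f g
  assume "qgalois (PX X) (PX Y) f g"
  from axiality_eq_d_star_up_d_star_low[OF assms(2,3) this]
  show "\<exists>\<phi>. is_qdist Y X \<phi> \<and> (\<forall>\<mu>\<in>carr (PX X). f \<mu> = d_star_up Y X \<phi> \<mu>) \<and>
      (\<forall>\<mu>\<in>carr (PX Y). g \<mu> = d_star_low Y X \<phi> \<mu>)" by blast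
next
  fix f g
  assume "qgalois (PdX X) (PdX Y) f g"
  from dual_axiality_eq_d_dag_low_d_dag_up[OF assms(2,3) this]
  show "\<exists>\<phi>. is_qdist Y X \<phi> \<and> (\<forall>l\<in>carr (PdX X). f l = d_dag_low Y X \<phi> l) \<and>
      (\<forall>l\<in>carr (PdX Y). g l = d_dag_up Y X \<phi> l)" by blast
qed

end
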